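(* Consider the problem and algorithm AC2CD described in the context (including the additional requirement on $A^{k,i}$), and assume that $f$ is convex over $\mathbb{R}^n$. Let $f^*$ be the optimal value of the problem and define \[ K=\max\Bigl\{\frac1{A_l},\frac{L^{\max}}{2\delta(1-\gamma)}\Bigr\}R_0+2\hat L R_0+G^*. \] Then at every outer iteration $k$, \[ f(x^k)-f(x^{k+1})\ge\frac{\gamma\,(f(x^{k+1})-f^* )^2}{A_u(n-1)K^2}. \]
   Context: Problem: minimize $f(x)$ subject to $e^T x = b$ and $l_i \le x_i \le u_i$ ($i=1,\dots,n$), where $n\ge 2$, $e$ is the all-ones vector, $b\in\mathbb{R}$, $l_i\in\mathbb{R}\cup\{-\infty\}$, $u_i\in\mathbb{R}\cup\{+\infty\}$, $l_i<u_i$, and $f:\mathbb{R}^n\to\mathbb{R}$ is continuously differentiable with $\nabla f$ Lipschitz continuous on $\mathbb{R}^n$. $\mathcal F$ is the feasible set, $e_i$ the $i$th unit vector. For $i\ne j$, $L_{i,j}>0$ are fixed constants such that for every $x\in\mathbb{R}^n$ and $s,t\in\mathbb{R}$, $|\nabla f(x+s(e_i-e_j))^T(e_i-e_j)-\nabla f(x+t(e_i-e_j))^T(e_i-e_j)|\le L_{i,j}|s-t|$; $L_{i,i}=0$; $L^{\max}=\max_{i,j}L_{i,j}$; $L_j=\sum_{i=1}^nL_{i,j}$; $\hat L=\max_jL_j$. $\|x\|_{\langle j\rangle}=\sqrt{\sum_{i\ne j}x_i^2}$. For $x\in\mathcal F$, $D_h(x)=\min\{x_h-l_h,u_h-x_h\}$.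 A point $x^*\in\mathcal F$ is stationary iff there is $\lambda^*\in\mathbb{R}$ with $\nabla_i f(x^* )\ge\lambda^*$ if $x^*_i=l_i$, $=\lambda^*$ if $l_i<x^*_i<u_i$, $\le\lambda^*$ if $x^*_i=u_i$; $X^*$ is the set of stationary points. With $\mathcal L_0=\{x\in\mathcal F: f(x)\le f(x^0)\}$, define $R_0=\max\{\|x-x^*\|_{\langle j\rangle}: j\in\{1,\dots,n\},\ x\in\mathcal L_0,\ x^*\in X^*\}$ and $G^*=\max\{\nabla_jf(x^* )-\nabla_if(x^* ): i,j\in\{1,\dots,n\},\ x^*\in X^*\}$. Algorithm AC2CD with parameters $\tau\in(0,1]$, $\gamma,\delta\in(0,1)$, $0<A_l\le A_u<\infty$ and starting point $x^0\in\mathcal F$: for $k=0,1,2,\dots$: let $D^k=\max_h D_h(x^k)$; choose $j(k)$ with $D_{j(k)}(x^k)\ge\tau D^k$; choose a permutation $(p^k_1,\dots,p^k_n)$ of $\{1,\dots,n\}$; set $z^{k,1}=x^k$; for $i=1,\dots,n$ (inner iteration $(k,i)$): $g^{k,i}=\nabla_{j(k)}f(z^{k,i})-\nabla_{p^k_i}f(z^{k,i})$, $d^{k,i}=g^{k,i}(e_{p^k_i}-e_{j(k)})$; $\bar\alpha^{k,i}=\min\{u_{p^k_i}-z^{k,i}_{p^k_i},z^{k,i}_{j(k)}-l_{j(k)}\}/g^{k,i}$ if $g^{k,i}>0$, $=\min\{z^{k,i}_{p^k_i}-l_{p^k_i},u_{j(k)}-z^{k,i}_{j(k)}\}/|g^{k,i}|$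 if $g^{k,i}<0$, $=0$ if $g^{k,i}=0$; choose $A^{k,i}\in[A_l,A_u]$, set $\Delta^{k,i}=\min\{\bar\alpha^{k,i},A^{k,i}\}$; starting from $\alpha=\Delta^{k,i}$, while $f(z^{k,i}+\alpha d^{k,i})>f(z^{k,i})+\gamma\alpha\nabla f(z^{k,i})^Td^{k,i}$ replace $\alpha$ by $\delta\alpha$; $\alpha^{k,i}$ is the final $\alpha$ and $z^{k,i+1}=z^{k,i}+\alpha^{k,i}d^{k,i}$. Then $x^{k+1}=z^{k,n+1}$. Additional requirement: the values $A^{k,i}\in[A_l,A_u]$ are chosen so that $l_{j(k)}<z^{k,i}_{j(k)}<u_{j(k)}$ for all $k\ge0$ and $i=1,\dots,n+1$. Standing assumptions: $\mathcal L_0$ is nonempty and compact, and every $x\in\mathcal L_0$ has some index $i$ with $l_i<x_i<u_i$. *)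

theory Defs
  imports "HOL-Analysis.Analysis"
begin

text \<open>Vectors in R^n are modelled as real^'n for a finite index type 'n (n = CARD('n)).
  Bounds l, u take values in the extended reals (l i may be -\<infinity>, u i may be +\<infinity>).
  The function grad is the gradient of f (imposed in the theorem via has_derivative).\<close>

definition feas :: "real \<Rightarrow> ('n::finite \<Rightarrow> ereal) \<Rightarrow> ('n \<Rightarrow> ereal) \<Rightarrow> (real^'n) set" where
  "feas b l u = {x. (\<Sum>i\<in>UNIV. x$i) = b \<and> (\<forall>i. l i \<le> ereal (x$i) \<and> ereal (x$i) \<le> u i)}"

definition level0 :: "(real^'n::finite \<Rightarrow> real) \<Rightarrow> real \<Rightarrow> ('n \<Rightarrow> ereal) \<Rightarrow> ('n \<Rightarrow> ereal) \<Rightarrow> real^'n \<Rightarrow> (real^'n) set" where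
  "level0 f b l u x0 = {x \<in> feas b l u. f x \<le> f x0}"

definition Dh :: "('n::finite \<Rightarrow> ereal) \<Rightarrow> ('n \<Rightarrow> ereal) \<Rightarrow> real^'n \<Rightarrow> 'n \<Rightarrow> ereal" where
  "Dh l u x h = min (ereal (x$h) - l h) (u h - ereal (x$h))"

definition stationary :: "(real^'n::finite \<Rightarrow> real^'n) \<Rightarrow> real \<Rightarrow> ('n \<Rightarrow> ereal) \<Rightarrow> ('n \<Rightarrow> ereal) \<Rightarrow> real^'n \<Rightarrow> bool" where
  "stationary grad b l u x \<longleftrightarrow> x \<in> feas b l u \<and>
     (\<exists>lam::real. \<forall>i.
        (ereal (x$i) = l i \<longrightarrow> grad x $ i \<ge> lam) \<and>
        (l i < ereal (x$i) \<and> ereal (x$i) < u i \<longrightarrow> grad x $ i = lam) \<and>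
        (ereal (x$i) = u i \<longrightarrow> grad x $ i \<le> lam))"

definition Xstar :: "(real^'n::finite \<Rightarrow> real^'n) \<Rightarrow> real \<Rightarrow> ('n \<Rightarrow> ereal) \<Rightarrow> ('n \<Rightarrow> ereal) \<Rightarrow> (real^'n) set" where
  "Xstar grad b l u = {x. stationary grad b l u x}"

definition norm_ex :: "'n::finite \<Rightarrow> real^'n \<Rightarrow> real" where
  "norm_ex j x = sqrt (\<Sum>i\<in>UNIV - {j}. (x$i)^2)"

definition R0 :: "(real^'n::finite \<Rightarrow> real) \<Rightarrow> (real^'n \<Rightarrow> real^'n) \<Rightarrow> real \<Rightarrow> ('n \<Rightarrow> ereal) \<Rightarrow> ('n \<Rightarrow> ereal) \<Rightarrow> real^'n \<Rightarrow> real" where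
  "R0 f grad b l u x0 = Sup {norm_ex j (x - xs) | j x xs. x \<in> level0 f b l u x0 \<and> xs \<in> Xstar grad b l u}"

definition Gstar :: "(real^'n::finite \<Rightarrow> real^'n) \<Rightarrow> real \<Rightarrow> ('n \<Rightarrow> ereal) \<Rightarrow> ('n \<Rightarrow> ereal) \<Rightarrow> real" where
  "Gstar grad b l u = Sup {grad xs $ j - grad xs $ i | i j xs. xs \<in> Xstar grad b l u}"

definition Lmax :: "('n::finite \<Rightarrow> 'n \<Rightarrow> real) \<Rightarrow> real" where
  "Lmax Lc = Max {Lc i j | i j. True}"

definition Lhat :: "('n::finite \<Rightarrow> 'n \<Rightarrow> real) \<Rightarrow> real" where
  "Lhat Lc = Max (range (\<lambda>j. \<Sum>i\<in>UNIV. Lc i j))"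

text \<open>Maximal feasible stepsize \<bar>\<alpha>\<close>
definition abar :: "('n::finite \<Rightarrow> ereal) \<Rightarrow> ('n \<Rightarrow> ereal) \<Rightarrow> 'n \<Rightarrow> 'n \<Rightarrow> real^'n \<Rightarrow> real \<Rightarrow> ereal" where
  "abar l u j p z g =
    (if g > 0 then min (u p - ereal (z$p)) (ereal (z$j) - l j) / ereal g
     else if g < 0 then min (ereal (z$p) - l p) (u j - ereal (z$j)) / ereal \<bar>g\<bar>
     else 0)"

definition armijo :: "(real^'n::finite \<Rightarrow> real) \<Rightarrow> (real^'n \<Rightarrow> real^'n) \<Rightarrow> real \<Rightarrow> real^'n \<Rightarrow> real^'n \<Rightarrow> real \<Rightarrow> bool" where
  "armijo f grad \<gamma> z d a \<longleftrightarrow> f (z + a *\<^sub>R d) \<le> f z + \<gamma> * a * (grad z \<bullet> d)"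

text \<open>A run of AC2CD: x outer iterates, j the chosen index j(k), p k the permutation
  (p k i = p^k_i for i = 1..n), A the trial values A^{k,i}, z the inner iterates z^{k,i},
  \<alpha> the accepted steps \<alpha>^{k,i}.\<close>
definition AC2CD_run ::
  "(real^'n::finite \<Rightarrow> real) \<Rightarrow> (real^'n \<Rightarrow> real^'n) \<Rightarrow> ('n \<Rightarrow> ereal) \<Rightarrow> ('n \<Rightarrow> ereal) \<Rightarrow>
   real \<Rightarrow> real \<Rightarrow> real \<Rightarrow> real \<Rightarrow> real \<Rightarrow>
   (nat \<Rightarrow> real^'n) \<Rightarrow> (nat \<Rightarrow> 'n) \<Rightarrow> (nat \<Rightarrow> nat \<Rightarrow> 'n) \<Rightarrow> (nat \<Rightarrow> nat \<Rightarrow> real) \<Rightarrow>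
   (nat \<Rightarrow> nat \<Rightarrow> real^'n) \<Rightarrow> (nat \<Rightarrow> nat \<Rightarrow> real) \<Rightarrow> bool" where
  "AC2CD_run f grad l u \<tau> \<gamma> \<delta> Al Au x j p A z \<alpha> \<longleftrightarrow>
    (\<forall>k. Dh l u (x k) (j k) \<ge> ereal \<tau> * Max (range (Dh l u (x k)))) \<and>
    (\<forall>k. bij_betw (p k) {1..CARD('n)} UNIV) \<and>
    (\<forall>k. z k 1 = x k \<and> x (Suc k) = z k (CARD('n) + 1)) \<and>
    (\<forall>k i. 1 \<le> i \<and> i \<le> CARD('n) \<longrightarrow>
      (let g = grad (z k i) $ j k - grad (z k i) $ p k i;
           d = g *\<^sub>R (axis (p k i) 1 - axis (j k) 1);
           \<Delta> = real_of_ereal (min (abar l u (j k) (p k i) (z k i) g) (ereal (A k i)))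
       in Al \<le> A k i \<and> A k i \<le> Au \<and>
          (\<exists>m::nat. \<alpha> k i = \<delta>^m * \<Delta> \<and> armijo f grad \<gamma> (z k i) d (\<delta>^m * \<Delta>) \<and>
             (\<forall>m'<m. \<not> armijo f grad \<gamma> (z k i) d (\<delta>^m' * \<Delta>))) \<and>
          z k (Suc i) = z k i + \<alpha> k i *\<^sub>R d))"

end

theory Submission
  imports Defs
begin

text \<open>
  Let x* be a minimiser; it is stationary because some coordinate of it lies strictly between
  its bounds. By convexity f(x(k+1)) - f* <= grad f(x(k+1)) . (x(k+1) - x*), and since
  x(k+1) - x* sums to zero the gradient may be replaced by its differences to coordinate j(k).
  Telescoping these along the inner iterates, in the order of the permutation p(k), splits the
  component of coordinate p(k,i) into -g(k,i) and the gradient changes caused by the later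
  inner steps. The first part is at most max(1/Al, Lmax/(2 delta (1 - gamma))) alpha(k,i) |g(k,i)| R0:
  an accepted step is either long (at least Al, or beyond 2 delta (1 - gamma)/Lmax after
  backtracking), or it stops at a bound of coordinate p(k,i), where the term has a favourable
  sign. The second part is controlled by Cauchy-Schwarz and the cocoercivity estimate
  |change of (grad f - grad_j f)| <= L_j |change of x|_<j>. Hence
  f(x(k+1)) - f* <= K sum_i alpha(k,i) |g(k,i)|, and Cauchy-Schwarz together with the Armijo
  decrease f(x(k)) - f(x(k+1)) >= gamma sum_i alpha(k,i) g(k,i)^2 gives the claim.
\<close>

section \<open>Calculus along lines and finite sums\<close>

lemma has_real_derivative_along_line:
  fixes f :: "'a::real_inner \<Rightarrow> real"
  assumes "(f has_derivative (\<lambda>h. G \<bullet> h)) (at (x + t *\<^sub>R v))"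
  shows "((\<lambda>s. f (x + s *\<^sub>R v)) has_real_derivative (G \<bullet> v)) (at t)"
proof -
  have "((\<lambda>s. x + s *\<^sub>R v) has_derivative (\<lambda>h. h *\<^sub>R v)) (at t)"
    by (auto intro!: derivative_eq_intros)
  from has_derivative_compose[OF this assms]
  have "((\<lambda>s. f (x + s *\<^sub>R v)) has_derivative (\<lambda>h. G \<bullet> (h *\<^sub>R v))) (at t)"
    by (simp add: o_def)
  moreover have "(\<lambda>h. G \<bullet> (h *\<^sub>R v)) = (*) (G \<bullet> v)"
    by (auto simp: fun_eq_iff)
  ultimately show ?thesis
    by (simp add: has_field_derivative_def)
qed

lemma convex_gradient_inequality:
  fixes f :: "'a::real_inner \<Rightarrow> real"
  assumes "convex_on UNIV f" and "(f has_derivative (\<lambda>h. G \<bullet> h)) (at x)"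
  shows "f x + G \<bullet> (w - x) \<le> f w"
proof -
  let ?phi = "\<lambda>t. f (x + t *\<^sub>R (w - x))"
  have "convex_on UNIV ?phi"
  proof (rule convex_onI)
    fix t a b :: real assume "0 < t" "t < 1"
    moreover have "x + ((1 - t) * a + t * b) *\<^sub>R (w - x)
        = (1 - t) *\<^sub>R (x + a *\<^sub>R (w - x)) + t *\<^sub>R (x + b *\<^sub>R (w - x))"
      by (simp add: algebra_simps)
    ultimately show "?phi ((1 - t) *\<^sub>R a + t *\<^sub>R b) \<le> (1 - t) * ?phi a + t * ?phi b"
      using convex_onD[OF assms(1), of t "x + a *\<^sub>R (w - x)" "x + b *\<^sub>R (w - x)"] by simp
  qed auto
  moreover have "(?phi has_field_derivative (G \<bullet> (w - x))) (at 0 within UNIV)"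
    using has_real_derivative_along_line[of f G x 0 "w - x"] assms(2) by simp
  ultimately have "(G \<bullet> (w - x)) * (1 - 0) \<le> ?phi 1 - ?phi 0"
    by (intro convex_on_imp_above_tangent) auto
  then show ?thesis by simp
qed

lemma descent_lemma_along_line:
  fixes f :: "'a::real_inner \<Rightarrow> real"
  assumes grad: "\<And>s. (f has_derivative (\<lambda>h. grad (y + s *\<^sub>R w) \<bullet> h)) (at (y + s *\<^sub>R w))"
    and lip: "\<And>s t. \<bar>grad (y + s *\<^sub>R w) \<bullet> w - grad (y + t *\<^sub>R w) \<bullet> w\<bar> \<le> L * \<bar>s - t\<bar>"
  shows "f (y + t *\<^sub>R w) \<le> f y + t * (grad y \<bullet> w) + L * t\<^sup>2 / 2"
proof -
  define psi where "psi s = f (y + s *\<^sub>R w) - f y - s * (grad y \<bullet> w) - L * s\<^sup>2 / 2" for s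
  have dpsi: "DERIV psi s :> grad (y + s *\<^sub>R w) \<bullet> w - grad y \<bullet> w - L * s" for s
    unfolding psi_def
    by (rule derivative_eq_intros has_real_derivative_along_line[OF grad] | simp)+
  have bound: "\<bar>grad (y + s *\<^sub>R w) \<bullet> w - grad y \<bullet> w\<bar> \<le> L * \<bar>s\<bar>" for s
    using lip[of s 0] by simp
  have "psi t \<le> psi 0"
  proof (cases "0 \<le> t")
    case True
    show ?thesis
    proof (rule DERIV_nonpos_imp_nonincreasing[OF True])
      fix s :: real assume "0 \<le> s" "s \<le> t"
      then show "\<exists>d. DERIV psi s :> d \<and> d \<le> 0"
        using dpsi[of s] bound[of s] by (auto simp: abs_le_iff)
    qed
  next
    case False
    show ?thesis
    proof (rule DERIV_nonneg_imp_nondecreasing[of t])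
      fix s :: real assume "t \<le> s" "s \<le> 0"
      then show "\<exists>d. DERIV psi s :> d \<and> 0 \<le> d"
        using dpsi[of s] bound[of s] by (auto simp: abs_le_iff)
    qed (use False in simp)
  qed
  then show ?thesis by (simp add: psi_def)
qed

lemma sum_triangle_swap:
  fixes F :: "nat \<Rightarrow> nat \<Rightarrow> 'a::comm_monoid_add"
  shows "(\<Sum>i\<in>{1..N}. \<Sum>m\<in>{i..N}. F i m) = (\<Sum>m\<in>{1..N}. \<Sum>i\<in>{1..m}. F i m)"
proof -
  have "(\<Sum>i\<in>{1..N}. \<Sum>m\<in>{i..N}. F i m) = (\<Sum>i\<in>{1..N}. \<Sum>m\<in>{m. m \<in> {1..N} \<and> i \<le> m}. F i m)"
    by (intro sum.cong) auto
  also have "\<dots> = (\<Sum>m\<in>{1..N}. \<Sum>i\<in>{i. i \<in> {1..N} \<and> i \<le> m}. F i m)"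
    by (rule sum.swap_restrict) auto
  also have "\<dots> = (\<Sum>m\<in>{1..N}. \<Sum>i\<in>{1..m}. F i m)"
    by (intro sum.cong) auto
  finally show ?thesis .
qed

lemma weighted_Cauchy_Schwarz:
  fixes a b :: "'i \<Rightarrow> real"
  assumes "\<And>i. i \<in> I \<Longrightarrow> 0 \<le> a i"
  shows "(\<Sum>i\<in>I. a i * \<bar>b i\<bar>)\<^sup>2 \<le> (\<Sum>i\<in>I. a i) * (\<Sum>i\<in>I. a i * (b i)\<^sup>2)"
proof -
  have "(\<Sum>i\<in>I. a i * \<bar>b i\<bar>) = (\<Sum>i\<in>I. sqrt (a i) * (sqrt (a i) * \<bar>b i\<bar>))"
    using assms by (intro sum.cong) (simp_all flip: mult.assoc)
  also have "\<dots>\<^sup>2 \<le> (\<Sum>i\<in>I. (sqrt (a i))\<^sup>2) * (\<Sum>i\<in>I. (sqrt (a i) * \<bar>b i\<bar>)\<^sup>2)"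
    by (rule Cauchy_Schwarz_ineq_sum)
  also have "\<dots> = (\<Sum>i\<in>I. a i) * (\<Sum>i\<in>I. a i * (b i)\<^sup>2)"
    using assms by (simp add: power_mult_distrib)
  finally show ?thesis .
qed

lemma quadratic_decrease_bound:
  fixes E K T Q D c \<gamma> :: real
  assumes "0 \<le> E" "E \<le> K * T" "T\<^sup>2 \<le> c * Q" "0 \<le> c" "0 < \<gamma>" "0 \<le> Q" "\<gamma> * Q \<le> D"
  shows "\<gamma> * E\<^sup>2 / (c * K\<^sup>2) \<le> D"
proof (cases "c * K\<^sup>2 = 0")
  case True
  have "0 \<le> D"
    using assms(5-7) by (meson less_imp_le mult_nonneg_nonneg order_trans)
  moreover have "\<gamma> * E\<^sup>2 / (c * K\<^sup>2) = 0"
    unfolding True by simp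
  ultimately show ?thesis
    by linarith
next
  case False
  then have pos: "0 < c * K\<^sup>2"
    using assms(4) by (simp add: order_less_le)
  have "E\<^sup>2 \<le> K\<^sup>2 * T\<^sup>2"
    using assms(1,2) power_mono[of E "K * T" 2] by (simp add: power_mult_distrib)
  also have "\<dots> \<le> K\<^sup>2 * (c * Q)"
    using assms(3) by (simp add: mult_left_mono)
  finally have "\<gamma> * E\<^sup>2 \<le> \<gamma> * (K\<^sup>2 * (c * Q))"
    using assms(5) by (simp add: mult_left_mono)
  also have "\<dots> = (c * K\<^sup>2) * (\<gamma> * Q)"
    by (simp add: ac_simps)
  also have "\<dots> \<le> (c * K\<^sup>2) * D"
    using pos assms(7) by (simp add: mult_left_mono)
  finally show ?thesis
    using pos by (simp add: pos_divide_le_eq mult.commute)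
qed

section \<open>Coordinates relative to a fixed index\<close>

lemma inner_axis_diff: "(g::real^'n::finite) \<bullet> (axis a 1 - axis c 1) = g$a - g$c"
  by (simp add: inner_diff_right inner_axis)

lemma sum_axis_diff_eq:
  fixes h :: "real^'n::finite"
  assumes "(\<Sum>i\<in>UNIV. h$i) = 0"
  shows "(\<Sum>a\<in>UNIV - {j}. h$a *\<^sub>R (axis a 1 - axis j 1)) = h"
proof (subst vec_eq_iff, intro allI)
  fix c
  have "(\<Sum>a\<in>UNIV - {j}. h$a *\<^sub>R (axis a 1 - axis j 1)) $ c
      = (\<Sum>a\<in>UNIV - {j}. h$a * ((if a = c then 1 else 0) - (if j = c then 1 else 0)))"
    by (auto simp: sum_component axis_def intro!: sum.cong split: if_splits)
  also have "\<dots> = h$c"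
  proof (cases "c = j")
    case True
    have "(\<Sum>a\<in>UNIV - {j}. h$a) = - h$j"
      using assms by (simp add: sum_diff1)
    with True show ?thesis by (simp add: sum_negf)
  next
    case False
    then have "(\<Sum>a\<in>UNIV - {j}. h$a * ((if a = c then 1 else 0) - (if j = c then 1 else 0)))
        = (\<Sum>a\<in>UNIV - {j}. if a = c then h$a else 0)"
      by (intro sum.cong) auto
    with False show ?thesis by (simp add: sum.delta)
  qed
  finally show "(\<Sum>a\<in>UNIV - {j}. h$a *\<^sub>R (axis a 1 - axis j 1)) $ c = h$c" .
qed

definition diff_coord :: "'n::finite \<Rightarrow> real^'n \<Rightarrow> real^'n" where
  "diff_coord j v = (\<chi> h. v$h - v$j)"

definition drop_coord :: "'n::finite \<Rightarrow> real^'n \<Rightarrow> real^'n" where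
  "drop_coord j v = (\<chi> h. if h = j then 0 else v$h)"

lemma diff_coord_same [simp]: "diff_coord j v $ j = 0"
  by (simp add: diff_coord_def)

lemma diff_coord_diff: "diff_coord j (v - w) = diff_coord j v - diff_coord j w"
  by (simp add: diff_coord_def vec_eq_iff)

lemma inner_diff_coord_zero_sum:
  assumes "(\<Sum>i\<in>UNIV. v$i) = 0"
  shows "diff_coord j G \<bullet> v = G \<bullet> v"
proof -
  have "diff_coord j G \<bullet> v = G \<bullet> v - G$j * (\<Sum>i\<in>UNIV. v$i)"
    by (simp add: diff_coord_def inner_vec_def algebra_simps sum_subtractf sum_distrib_left)
  with assms show ?thesis by simp
qed

lemma inner_drop_coord:
  assumes "G $ j = 0"
  shows "G \<bullet> drop_coord j v = G \<bullet> v"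
  unfolding inner_vec_def drop_coord_def using assms by (intro sum.cong) auto

lemma norm_ex_sq: "(norm_ex j v)\<^sup>2 = (\<Sum>i\<in>UNIV - {j}. (v$i)\<^sup>2)"
  unfolding norm_ex_def by (intro real_sqrt_pow2 sum_nonneg) simp

lemma norm_ex_nonneg: "0 \<le> norm_ex j v"
  unfolding norm_ex_def by (intro real_sqrt_ge_zero sum_nonneg) simp

lemma norm_sq_eq_sum: "(norm (v::real^'n::finite))\<^sup>2 = (\<Sum>i\<in>UNIV. (v$i)\<^sup>2)"
  by (simp add: norm_vec_def L2_set_def sum_nonneg)

lemma norm_ex_eq_norm:
  assumes "v $ j = 0"
  shows "norm_ex j v = norm v"
proof -
  have "(norm_ex j v)\<^sup>2 = (norm v)\<^sup>2"
    using assms by (simp add: norm_ex_sq norm_sq_eq_sum sum_diff1)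
  then show ?thesis
    using norm_ex_nonneg[of j v] norm_ge_zero[of v] power2_eq_iff_nonneg by blast
qed

lemma norm_drop_coord: "norm (drop_coord j v) = norm_ex j v"
proof -
  have "norm (drop_coord j v) = norm_ex j (drop_coord j v)"
    by (rule norm_ex_eq_norm[symmetric]) (simp add: drop_coord_def)
  also have "\<dots> = norm_ex j v"
    unfolding norm_ex_def by (intro arg_cong[where f = sqrt] sum.cong) (auto simp: drop_coord_def)
  finally show ?thesis .
qed

lemma norm_ex_le_norm: "norm_ex j v \<le> norm v"
proof -
  have "norm (drop_coord j v) \<le> norm v"
    by (rule norm_le_componentwise_cart) (simp add: drop_coord_def)
  then show ?thesis by (simp add: norm_drop_coord)
qed

lemma norm_ex_scaleR: "norm_ex j (c *\<^sub>R v) = \<bar>c\<bar> * norm_ex j v"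
proof -
  have "(\<Sum>i\<in>UNIV - {j}. ((c *\<^sub>R v) $ i)\<^sup>2) = c\<^sup>2 * (\<Sum>i\<in>UNIV - {j}. (v $ i)\<^sup>2)"
    by (simp add: sum_distrib_left power_mult_distrib)
  then show ?thesis
    unfolding norm_ex_def by (simp add: real_sqrt_mult)
qed

lemma sum_reindexed_inner_le:
  fixes v w :: "real^'n::finite"
  assumes "inj_on p I" "finite I"
  shows "(\<Sum>i\<in>I. v $ p i * w $ p i) \<le> norm v * norm w"
proof -
  have partial: "(\<Sum>i\<in>I. (u $ p i)\<^sup>2) \<le> (norm u)\<^sup>2" for u :: "real^'n"
  proof -
    have "(\<Sum>i\<in>I. (u $ p i)\<^sup>2) = (\<Sum>h\<in>p ` I. (u $ h)\<^sup>2)"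
      using sum.reindex[OF assms(1), of "\<lambda>h. (u $ h)\<^sup>2"] by simp
    also have "\<dots> \<le> (\<Sum>h\<in>UNIV. (u $ h)\<^sup>2)"
      by (intro sum_mono2) auto
    finally show ?thesis
      by (simp add: norm_sq_eq_sum)
  qed
  have "(\<Sum>i\<in>I. v $ p i * w $ p i)\<^sup>2 \<le> (\<Sum>i\<in>I. (v $ p i)\<^sup>2) * (\<Sum>i\<in>I. (w $ p i)\<^sup>2)"
    by (rule Cauchy_Schwarz_ineq_sum)
  also have "\<dots> \<le> (norm v)\<^sup>2 * (norm w)\<^sup>2"
    by (intro mult_mono partial) (auto intro: sum_nonneg)
  also have "\<dots> = (norm v * norm w)\<^sup>2"
    by (simp add: power_mult_distrib)
  finally show ?thesis
    by (rule power2_le_imp_le) simp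
qed

lemma Lc_le_Lmax: "Lc a c \<le> Lmax Lc"
proof -
  have "{Lc i j |i j. True} = (\<lambda>(i, j). Lc i j) ` UNIV"
    by auto
  then have "finite {Lc i j |i j. True}"
    by simp
  then show ?thesis
    unfolding Lmax_def by (rule Max_ge) blast
qed

lemma column_sum_le_Lhat: "(\<Sum>a\<in>UNIV. Lc a c) \<le> Lhat Lc"
  unfolding Lhat_def by (rule Max_ge) auto

section \<open>The feasible set and the step sizes\<close>

lemma feasD:
  assumes "y \<in> feas b l u"
  shows "l h \<le> ereal (y$h)" "ereal (y$h) \<le> u h" "(\<Sum>i\<in>UNIV. y$i) = b"
  using assms by (auto simp: feas_def)

lemma feas_move_pair:
  assumes z: "z \<in> feas b l u" and PJ: "P \<noteq> J"
    and "l P \<le> ereal (z$P + c)" "ereal (z$P + c) \<le> u P"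
    and "l J \<le> ereal (z$J - c)" "ereal (z$J - c) \<le> u J"
  shows "z + c *\<^sub>R (axis P 1 - axis J 1) \<in> feas b l u"
proof -
  have comp: "(z + c *\<^sub>R (axis P 1 - axis J 1)) $ h
      = (if h = P then z$P + c else if h = J then z$J - c else z$h)" for h
    using PJ by (simp add: axis_def)
  have "(\<Sum>h\<in>UNIV. (axis P 1 - axis J 1 :: real^'a) $ h) = 0"
    by (simp add: axis_def sum_subtractf)
  then have "(\<Sum>h\<in>UNIV. (z + c *\<^sub>R (axis P 1 - axis J 1)) $ h) = b"
    using feasD(3)[OF z] by (simp add: sum.distrib sum_distrib_left[symmetric])
  moreover have "l h \<le> ereal ((z + c *\<^sub>R (axis P 1 - axis J 1)) $ h)
      \<and> ereal ((z + c *\<^sub>R (axis P 1 - axis J 1)) $ h) \<le> u h" for h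
    unfolding comp using assms feasD(1,2)[OF z, of h] by auto
  ultimately show ?thesis
    by (simp add: feas_def)
qed

lemma ereal_le_minus_real_iff: "ereal a \<le> U - ereal z \<longleftrightarrow> ereal (z + a) \<le> U"
  by (cases U) auto

lemma ereal_le_real_minus_iff: "ereal a \<le> ereal z - L \<longleftrightarrow> L \<le> ereal (z - a)"
  by (cases L) auto

lemma ereal_eq_minus_real_iff: "ereal a = U - ereal z \<longleftrightarrow> ereal (z + a) = U"
  by (cases U) auto

lemma ereal_eq_real_minus_iff: "ereal a = ereal z - L \<longleftrightarrow> L = ereal (z - a)"
  by (cases L) auto

lemma ereal_le_divide_real_iff: "0 < c \<Longrightarrow> ereal t \<le> m / ereal c \<longleftrightarrow> ereal (t * c) \<le> m"
  by (cases m) (auto simp: field_simps)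

lemma ereal_eq_divide_real_iff: "0 < c \<Longrightarrow> ereal t = m / ereal c \<longleftrightarrow> ereal (t * c) = m"
  by (cases m) (auto simp: field_simps)

lemma ereal_minus_nonneg: "ereal z \<le> U \<Longrightarrow> 0 \<le> U - ereal z"
  by (cases U) auto

lemma ereal_minus_nonneg': "L \<le> ereal z \<Longrightarrow> 0 \<le> ereal z - L"
  by (cases L) auto

lemma abar_nonneg:
  assumes "z \<in> feas b l u"
  shows "0 \<le> abar l u J P z g"
  using ereal_minus_nonneg[OF feasD(2)[OF assms]] ereal_minus_nonneg'[OF feasD(1)[OF assms]]
  by (simp add: abar_def)

lemma abar_step_feasible:
  assumes z: "z \<in> feas b l u" and PJ: "P \<noteq> J"
    and t: "0 \<le> t" "ereal t \<le> abar l u J P z g"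
  shows "z + (t * g) *\<^sub>R (axis P 1 - axis J 1) \<in> feas b l u"
proof -
  note lower = feasD(1)[OF z] and upper = feasD(2)[OF z]
  consider "0 < g" | "g < 0" | "g = 0"
    by linarith
  then have "l P \<le> ereal (z$P + t * g) \<and> ereal (z$P + t * g) \<le> u P
      \<and> l J \<le> ereal (z$J - t * g) \<and> ereal (z$J - t * g) \<le> u J"
  proof cases
    case 1
    then have "ereal (t * g) \<le> u P - ereal (z$P)" "ereal (t * g) \<le> ereal (z$J) - l J"
      using t by (simp_all add: abar_def ereal_le_divide_real_iff)
    then have "ereal (z$P + t * g) \<le> u P" "l J \<le> ereal (z$J - t * g)"
      by (simp_all only: ereal_le_minus_real_iff ereal_le_real_minus_iff)
    moreover have "l P \<le> ereal (z$P + t * g)"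
      using 1 t by (intro order_trans[OF lower[of P]]) simp
    moreover have "ereal (z$J - t * g) \<le> u J"
      using 1 t by (intro order_trans[OF _ upper[of J]]) simp
    ultimately show ?thesis
      by blast
  next
    case 2
    then have "ereal (t * \<bar>g\<bar>) \<le> ereal (z$P) - l P" "ereal (t * \<bar>g\<bar>) \<le> u J - ereal (z$J)"
      using t by (simp_all add: abar_def ereal_le_divide_real_iff)
    then have "l P \<le> ereal (z$P - t * \<bar>g\<bar>)" "ereal (z$J + t * \<bar>g\<bar>) \<le> u J"
      by (simp_all only: ereal_le_minus_real_iff ereal_le_real_minus_iff)
    moreover have "ereal (z$P - t * \<bar>g\<bar>) \<le> u P"
      using t by (intro order_trans[OF _ upper[of P]]) simp
    moreover have "l J \<le> ereal (z$J + t * \<bar>g\<bar>)"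
      using t by (intro order_trans[OF lower[of J]]) simp
    moreover have "z$P + t * g = z$P - t * \<bar>g\<bar>" "z$J - t * g = z$J + t * \<bar>g\<bar>"
      using 2 by simp_all
    ultimately show ?thesis
      by metis
  next
    case 3
    then show ?thesis
      using lower upper by simp
  qed
  then show ?thesis
    by (intro feas_move_pair[OF z PJ]) auto
qed

lemma abar_step_active:
  assumes "g \<noteq> 0" and "ereal t = abar l u J P z g"
  shows "ereal (z$P + t * g) = (if 0 < g then u P else l P)
    \<or> ereal (z$J - t * g) = (if 0 < g then l J else u J)"
proof (cases "0 < g")
  case True
  then have "ereal (t * g) = min (u P - ereal (z$P)) (ereal (z$J) - l J)"
    using assms(2) by (simp add: abar_def ereal_eq_divide_real_iff)
  then have "ereal (t * g) = u P - ereal (z$P) \<or> ereal (t * g) = ereal (z$J) - l J"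
    by (metis min_def)
  then show ?thesis
    using True unfolding ereal_eq_minus_real_iff ereal_eq_real_minus_iff by auto
next
  case False
  with assms(1) have "g < 0" by simp
  then have "ereal (t * \<bar>g\<bar>) = min (ereal (z$P) - l P) (u J - ereal (z$J))"
    using assms(2) by (simp add: abar_def ereal_eq_divide_real_iff)
  then have "ereal (t * \<bar>g\<bar>) = ereal (z$P) - l P \<or> ereal (t * \<bar>g\<bar>) = u J - ereal (z$J)"
    by (metis min_def)
  then have "l P = ereal (z$P - t * \<bar>g\<bar>) \<or> ereal (z$J + t * \<bar>g\<bar>) = u J"
    unfolding ereal_eq_minus_real_iff ereal_eq_real_minus_iff by (simp add: add.commute)
  moreover have "z$P + t * g = z$P - t * \<bar>g\<bar>" "z$J - t * g = z$J + t * \<bar>g\<bar>"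
    using \<open>g < 0\<close> by simp_all
  ultimately show ?thesis
    using False by (simp only: if_False) metis
qed

lemma armijo_failure_step_bound:
  fixes f :: "real^'n::finite \<Rightarrow> real"
  assumes grad: "\<forall>y. (f has_derivative (\<lambda>h. grad y \<bullet> h)) (at y)"
    and lip: "\<And>s t. \<bar>grad (z + s *\<^sub>R w) \<bullet> w - grad (z + t *\<^sub>R w) \<bullet> w\<bar> \<le> L * \<bar>s - t\<bar>"
    and slope: "grad z \<bullet> w = - g" and "g \<noteq> 0" and "0 \<le> t"
    and fail: "\<not> armijo f grad \<gamma> z (g *\<^sub>R w) t"
  shows "2 * (1 - \<gamma>) < L * t"
proof -
  have "f z - \<gamma> * t * g\<^sup>2 < f (z + (t * g) *\<^sub>R w)"
    using fail slope by (simp add: armijo_def power2_eq_square algebra_simps)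
  also have "\<dots> \<le> f z - t * g\<^sup>2 + L * (t * g)\<^sup>2 / 2"
    using descent_lemma_along_line[of f grad z w L "t * g"] grad lip slope
    by (simp add: power2_eq_square)
  finally have less: "(1 - \<gamma>) * (t * g\<^sup>2) < (L * t / 2) * (t * g\<^sup>2)"
    by (simp add: power2_eq_square algebra_simps)
  with \<open>0 \<le> t\<close> have "0 < t"
    by (cases "t = 0") auto
  with \<open>g \<noteq> 0\<close> have "0 < t * g\<^sup>2"
    by simp
  with less have "1 - \<gamma> < L * t / 2"
    by (meson mult_right_less_imp_less less_imp_le)
  then show ?thesis
    by simp
qed

lemma ereal_room_above: "ereal a < U \<Longrightarrow> \<exists>e>0. ereal (a + e) \<le> U"
  by (cases U) (auto intro: exI[of _ 1] exI[of _ "real_of_ereal U - a"])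

lemma ereal_room_below: "L < ereal a \<Longrightarrow> \<exists>e>0. L \<le> ereal (a - e)"
  by (cases L) (auto intro: exI[of _ 1] exI[of _ "a - real_of_ereal L"])

lemma minimizer_gradient_order:
  fixes f :: "real^'n::finite \<Rightarrow> real"
  assumes grad: "(f has_derivative (\<lambda>h. grad xs \<bullet> h)) (at xs)"
    and xs: "xs \<in> feas b l u" and min: "\<forall>y\<in>feas b l u. f xs \<le> f y"
    and ac: "a \<noteq> c" and room_a: "ereal (xs$a) < u a" and room_c: "l c < ereal (xs$c)"
  shows "grad xs $ c \<le> grad xs $ a"
proof (rule ccontr)
  assume "\<not> grad xs $ c \<le> grad xs $ a"
  then have slope: "grad xs \<bullet> (axis a 1 - axis c 1) < 0"
    by (simp add: inner_axis_diff)
  have "DERIV (\<lambda>t. f (xs + t *\<^sub>R (axis a 1 - axis c 1))) 0 :> grad xs \<bullet> (axis a 1 - axis c 1)"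
    using has_real_derivative_along_line[of f "grad xs" xs 0] grad by simp
  from DERIV_neg_dec_right[OF this slope] obtain d where
    d: "0 < d" "\<And>h. 0 < h \<Longrightarrow> h < d \<Longrightarrow> f (xs + h *\<^sub>R (axis a 1 - axis c 1)) < f xs"
    by auto
  obtain e1 where e1: "0 < e1" "ereal (xs$a + e1) \<le> u a"
    using ereal_room_above[OF room_a] by blast
  obtain e2 where e2: "0 < e2" "l c \<le> ereal (xs$c - e2)"
    using ereal_room_below[OF room_c] by blast
  define h where "h = min (d / 2) (min e1 e2)"
  have h: "0 < h" "h < d" "h \<le> e1" "h \<le> e2"
    using d e1 e2 unfolding h_def by auto
  have "xs + h *\<^sub>R (axis a 1 - axis c 1) \<in> feas b l u"
  proof (rule feas_move_pair[OF xs ac])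
    show "l a \<le> ereal (xs$a + h)"
      using h by (intro order_trans[OF feasD(1)[OF xs]]) simp
    show "ereal (xs$a + h) \<le> u a"
      using h by (intro order_trans[OF _ e1(2)]) simp
    show "l c \<le> ereal (xs$c - h)"
      using h by (intro order_trans[OF e2(2)]) simp
    show "ereal (xs$c - h) \<le> u c"
      using h by (intro order_trans[OF _ feasD(2)[OF xs]]) simp
  qed
  with min d(2)[OF h(1,2)] show False
    by fastforce
qed

lemma minimizer_stationary:
  fixes f :: "real^'n::finite \<Rightarrow> real"
  assumes grad: "(f has_derivative (\<lambda>h. grad xs \<bullet> h)) (at xs)" and lu: "\<forall>i. l i < u i"
    and xs: "xs \<in> feas b l u" and min: "\<forall>y\<in>feas b l u. f xs \<le> f y"
    and i0: "l i0 < ereal (xs$i0)" "ereal (xs$i0) < u i0"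
  shows "stationary grad b l u xs"
  unfolding stationary_def
proof (intro conjI xs exI[of _ "grad xs $ i0"] allI)
  note order = minimizer_gradient_order[of f grad xs, OF grad xs min]
  fix c
  show "ereal (xs$c) = l c \<longrightarrow> grad xs $ i0 \<le> grad xs $ c"
    using order[of c i0] lu i0 by (cases "c = i0") auto
  show "ereal (xs$c) = u c \<longrightarrow> grad xs $ c \<le> grad xs $ i0"
    using order[of i0 c] lu i0 by (cases "c = i0") auto
  show "l c < ereal (xs$c) \<and> ereal (xs$c) < u c \<longrightarrow> grad xs $ c = grad xs $ i0"
    using order[of c i0] order[of i0 c] i0 by (cases "c = i0") auto
qed

section \<open>Smooth convex functions with pairwise Lipschitz constants\<close>

locale smooth_convex =
  fixes f :: "real^'n::finite \<Rightarrow> real" and grad :: "real^'n \<Rightarrow> real^'n"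
  assumes has_grad: "\<forall>y. (f has_derivative (\<lambda>h. grad y \<bullet> h)) (at y)"
    and convex: "convex_on UNIV f"
begin

lemma gradient_inequality: "f x + grad x \<bullet> (w - x) \<le> f w"
  using convex_gradient_inequality[OF convex] has_grad by blast

lemma stationary_imp_minimizer:
  assumes st: "stationary grad b l u xs" and y: "y \<in> feas b l u"
  shows "f xs \<le> f y"
proof -
  from st obtain lam where xs: "xs \<in> feas b l u" and lam: "\<forall>i.
        (ereal (xs$i) = l i \<longrightarrow> grad xs $ i \<ge> lam) \<and>
        (l i < ereal (xs$i) \<and> ereal (xs$i) < u i \<longrightarrow> grad xs $ i = lam) \<and>
        (ereal (xs$i) = u i \<longrightarrow> grad xs $ i \<le> lam)"
    unfolding stationary_def by blast
  have term_nonneg: "0 \<le> (grad xs $ i - lam) * (y - xs) $ i" for i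
  proof -
    consider "ereal (xs$i) = l i" | "ereal (xs$i) = u i" | "l i < ereal (xs$i) \<and> ereal (xs$i) < u i"
      using feasD(1,2)[OF xs, of i] by (auto simp: order.order_iff_strict)
    then show ?thesis
    proof cases
      case 1
      then have "xs$i \<le> y$i"
        using feasD(1)[OF y, of i] by (metis ereal_less_eq(3))
      with 1 lam show ?thesis by simp
    next
      case 2
      then have "y$i \<le> xs$i"
        using feasD(2)[OF y, of i] by (metis ereal_less_eq(3))
      with 2 lam show ?thesis by (simp add: mult_nonpos_nonpos)
    qed (use lam in simp)
  qed
  have "(\<Sum>i\<in>UNIV. (y - xs) $ i) = 0"
    using feasD(3)[OF xs] feasD(3)[OF y] by (simp add: sum_subtractf)
  moreover have "grad xs \<bullet> (y - xs)
      = (\<Sum>i\<in>UNIV. (grad xs $ i - lam) * (y - xs) $ i) + lam * (\<Sum>i\<in>UNIV. (y - xs) $ i)"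
    by (simp add: inner_vec_def algebra_simps sum.distrib sum_distrib_left sum_subtractf)
  ultimately have "grad xs \<bullet> (y - xs) = (\<Sum>i\<in>UNIV. (grad xs $ i - lam) * (y - xs) $ i)"
    by simp
  also have "\<dots> \<ge> 0"
    using term_nonneg by (rule sum_nonneg)
  finally show ?thesis
    using gradient_inequality[of xs y] by simp
qed

end

locale pair_smooth_convex = smooth_convex f grad
  for f :: "real^'n::finite \<Rightarrow> real" and grad +
  fixes Lc :: "'n \<Rightarrow> 'n \<Rightarrow> real"
  assumes card_ge_2: "CARD('n) \<ge> 2"
    and Lc_pos: "\<forall>i i'. i \<noteq> i' \<longrightarrow> Lc i i' > 0"
    and Lc_diag: "\<forall>i. Lc i i = 0"
    and Lc_lip: "\<forall>i i' y s t. i \<noteq> i' \<longrightarrow>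
        \<bar>grad (y + s *\<^sub>R (axis i 1 - axis i' 1)) \<bullet> (axis i 1 - axis i' 1)
         - grad (y + t *\<^sub>R (axis i 1 - axis i' 1)) \<bullet> (axis i 1 - axis i' 1)\<bar> \<le> Lc i i' * \<bar>s - t\<bar>"
begin

lemma Lc_nonneg: "0 \<le> Lc a c"
  using Lc_pos Lc_diag by (cases "a = c") (auto intro: less_imp_le)

lemma Lc_column_sum_eq: "(\<Sum>a\<in>UNIV. Lc a j) = (\<Sum>a\<in>UNIV - {j}. Lc a j)"
  using Lc_diag by (simp add: sum_diff1)

lemma Lc_column_sum_pos: "0 < (\<Sum>a\<in>UNIV. Lc a j)"
proof -
  have "card (UNIV - {j}) \<ge> 1"
    using card_ge_2 by (simp add: card_Diff_singleton)
  then have "UNIV - {j} \<noteq> {}"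
    by (metis card.empty not_one_le_zero)
  then show ?thesis
    unfolding Lc_column_sum_eq using Lc_pos by (intro sum_pos) auto
qed

lemma descent_along_pair:
  assumes "a \<noteq> c"
  shows "f (y + s *\<^sub>R (axis a 1 - axis c 1)) \<le> f y + s * (grad y $ a - grad y $ c) + Lc a c * s\<^sup>2 / 2"
  using descent_lemma_along_line[of f grad y "axis a 1 - axis c 1" "Lc a c" s] has_grad Lc_lip assms
  by (simp add: inner_axis_diff)

text \<open>Writing \<open>y + h\<close> as a convex combination of the points \<open>y + (h$a / \<lambda>\<^sub>a) (e\<^sub>a - e\<^sub>j)\<close>
  with weights \<open>\<lambda>\<^sub>a\<close> proportional to \<open>Lc a j\<close> turns the pairwise descent lemmas into one
  bound.\<close>
lemma zero_sum_upper_bound: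
  assumes h0: "(\<Sum>i\<in>UNIV. h$i) = 0"
  shows "f (y + h) \<le> f y + grad y \<bullet> h + (\<Sum>a\<in>UNIV. Lc a j) / 2 * (norm_ex j h)\<^sup>2"
proof -
  define U where "U = (UNIV::'n set) - {j}"
  define S where "S = (\<Sum>a\<in>UNIV. Lc a j)"
  define lam where "lam a = Lc a j / S" for a
  define e where "e a = axis a 1 - axis j (1::real)" for a
  have S_pos: "0 < S" and S_eq: "S = (\<Sum>a\<in>U. Lc a j)"
    unfolding S_def U_def by (rule Lc_column_sum_pos, rule Lc_column_sum_eq)
  have lam_pos: "0 < lam a" if "a \<in> U" for a
    using that Lc_pos S_pos unfolding lam_def U_def by simp
  have lam_sum: "(\<Sum>a\<in>U. lam a) = 1"
    using S_pos unfolding lam_def by (simp add: S_eq sum_divide_distrib[symmetric])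
  have "(\<Sum>a\<in>U. lam a *\<^sub>R (y + (h$a / lam a) *\<^sub>R e a)) = (\<Sum>a\<in>U. lam a *\<^sub>R y + h$a *\<^sub>R e a)"
    using lam_pos by (intro sum.cong) (auto simp: scaleR_add_right dest: lam_pos)
  also have "\<dots> = y + h"
    using sum_axis_diff_eq[OF h0, of j] lam_sum
    by (simp add: sum.distrib scaleR_sum_left[symmetric] U_def e_def)
  finally have comb: "(\<Sum>a\<in>U. lam a *\<^sub>R (y + (h$a / lam a) *\<^sub>R e a)) = y + h" .
  have "finite U"
    by (simp add: U_def)
  moreover have "U \<noteq> {}"
    using lam_sum by auto
  ultimately have "f (y + h) \<le> (\<Sum>a\<in>U. lam a * f (y + (h$a / lam a) *\<^sub>R e a))"
    unfolding comb[symmetric]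
    by (intro convex_on_sum[OF _ _ convex lam_sum]) (auto intro: less_imp_le lam_pos)
  also have "\<dots> \<le> (\<Sum>a\<in>U. lam a * f y + h$a * (grad y $ a - grad y $ j) + S / 2 * (h$a)\<^sup>2)"
  proof (rule sum_mono)
    fix a assume a: "a \<in> U"
    have "lam a * f (y + (h$a / lam a) *\<^sub>R e a)
        \<le> lam a * (f y + (h$a / lam a) * (grad y $ a - grad y $ j) + Lc a j * (h$a / lam a)\<^sup>2 / 2)"
      using descent_along_pair[of a j y "h$a / lam a"] a lam_pos[OF a]
      unfolding e_def U_def by (intro mult_left_mono) auto
    also have "\<dots> = lam a * f y + h$a * (grad y $ a - grad y $ j) + S / 2 * (h$a)\<^sup>2"
      using lam_pos[OF a] S_pos unfolding lam_def by (simp add: field_simps power2_eq_square)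
    finally show "lam a * f (y + (h$a / lam a) *\<^sub>R e a)
        \<le> lam a * f y + h$a * (grad y $ a - grad y $ j) + S / 2 * (h$a)\<^sup>2" .
  qed
  also have "\<dots> = f y + grad y \<bullet> (\<Sum>a\<in>U. h$a *\<^sub>R e a) + S / 2 * (norm_ex j h)\<^sup>2"
    by (simp add: sum.distrib lam_sum sum_distrib_left[symmetric] sum_distrib_right[symmetric]
        inner_sum_right e_def inner_axis_diff norm_ex_sq sum_divide_distrib[symmetric] flip: U_def)
  also have "\<dots> = f y + grad y \<bullet> h + S / 2 * (norm_ex j h)\<^sup>2"
    using sum_axis_diff_eq[OF h0, of j] unfolding U_def e_def by simp
  finally show ?thesis unfolding S_def .
qed

text \<open>Apply the upper bound at \<open>y\<close> along the zero-sum vector that agrees with \<open>-G/S\<close> off \<open>j\<close>,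
  and the gradient inequality at \<open>x\<close> to the point reached.\<close>
lemma diff_coord_cocoercive:
  "f x + grad x \<bullet> (y - x) + (norm (diff_coord j (grad y - grad x)))\<^sup>2 / (2 * (\<Sum>a\<in>UNIV. Lc a j))
     \<le> f y"
proof -
  define S where "S = (\<Sum>a\<in>UNIV. Lc a j)"
  define G where "G = diff_coord j (grad y - grad x)"
  define h where "h = G - (\<Sum>i\<in>UNIV. G$i) *\<^sub>R axis j (1::real)"
  define N where "N = (norm G)\<^sup>2 / (2 * S)"
  have S_pos: "0 < S"
    unfolding S_def by (rule Lc_column_sum_pos)
  have "(\<Sum>i\<in>UNIV. c * (if i = j then 1 else 0)) = c" for c :: real
    by (simp add: if_distrib[of "(*) c"] cong: if_cong)
  then have h_sum: "(\<Sum>i\<in>UNIV. h$i) = 0"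
    by (simp add: h_def sum_subtractf axis_def)
  have "norm_ex j h = norm_ex j G"
    unfolding norm_ex_def h_def by (intro arg_cong[where f = sqrt] sum.cong) (auto simp: axis_def)
  then have h_norm: "norm_ex j h = norm G"
    by (simp add: norm_ex_eq_norm G_def)
  have inner_h: "grad w \<bullet> h = diff_coord j (grad w) \<bullet> G" for w
    using inner_diff_coord_zero_sum[OF h_sum, of j "grad w"]
    by (simp add: h_def inner_diff_right inner_axis)
  define c where "c = - (1 / S)"
  have "(\<Sum>i\<in>UNIV. (c *\<^sub>R h) $ i) = 0"
    using h_sum by (simp add: sum_distrib_left[symmetric])
  note bound = zero_sum_upper_bound[OF this, of y j, folded S_def]
  have "S / 2 * (norm_ex j (c *\<^sub>R h))\<^sup>2 = N"
    unfolding norm_ex_scaleR h_norm using S_pos by (simp add: c_def N_def power2_eq_square field_simps)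
  with bound have upper: "f (y + c *\<^sub>R h) \<le> f y + c * (diff_coord j (grad y) \<bullet> G) + N"
    by (simp add: inner_h)
  have lower: "f x + grad x \<bullet> (y - x) + c * (diff_coord j (grad x) \<bullet> G) \<le> f (y + c *\<^sub>R h)"
    using gradient_inequality[of x "y + c *\<^sub>R h"] inner_h[of x]
    by (simp add: inner_diff_right inner_add_right algebra_simps)
  have "diff_coord j (grad y) \<bullet> G - diff_coord j (grad x) \<bullet> G = (norm G)\<^sup>2"
    by (simp add: G_def diff_coord_diff inner_diff_left power2_norm_eq_inner)
  then have "c * (diff_coord j (grad y) \<bullet> G) - c * (diff_coord j (grad x) \<bullet> G) = - 2 * N"
    using S_pos unfolding N_def c_def by (simp add: field_simps)
  with upper lower have "f x + grad x \<bullet> (y - x) + N \<le> f y"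
    by linarith
  then show ?thesis
    unfolding N_def G_def S_def .
qed

lemma diff_coord_lipschitz:
  assumes "(\<Sum>i\<in>UNIV. (y - x)$i) = 0"
  shows "norm (diff_coord j (grad y - grad x)) \<le> (\<Sum>a\<in>UNIV. Lc a j) * norm_ex j (y - x)"
proof -
  define S where "S = (\<Sum>a\<in>UNIV. Lc a j)"
  define G where "G = diff_coord j (grad y - grad x)"
  have S_pos: "0 < S"
    unfolding S_def by (rule Lc_column_sum_pos)
  have "norm (diff_coord j (grad x - grad y)) = norm G"
    by (metis G_def diff_coord_diff norm_minus_commute)
  then have "(norm G)\<^sup>2 / S \<le> (grad y - grad x) \<bullet> (y - x)"
    using diff_coord_cocoercive[of x y j] diff_coord_cocoercive[of y x j] S_pos
    unfolding G_def S_def by (simp add: inner_diff_left inner_diff_right field_simps)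
  also have "\<dots> = G \<bullet> drop_coord j (y - x)"
    using inner_diff_coord_zero_sum[OF assms, of j "grad y - grad x"] inner_drop_coord[of G j "y - x"]
    by (simp add: G_def)
  also have "\<dots> \<le> norm G * norm_ex j (y - x)"
    using norm_cauchy_schwarz by (metis norm_drop_coord)
  finally have "(norm G)\<^sup>2 \<le> S * (norm G * norm_ex j (y - x))"
    using S_pos by (simp add: field_simps)
  then have le: "norm G * norm G \<le> norm G * (S * norm_ex j (y - x))"
    by (simp add: power2_eq_square algebra_simps)
  have "norm G \<le> S * norm_ex j (y - x)"
  proof (cases "norm G = 0")
    case True
    with S_pos show ?thesis using norm_ex_nonneg[of j "y - x"] by simp
  next
    case False
    then have "0 < norm G" by simp
    with le show ?thesis by (simp add: mult_le_cancel_left_pos)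
  qed
  then show ?thesis
    unfolding G_def S_def .
qed

end

section \<open>The problem and a run of AC2CD\<close>

locale ac2cd_problem = smooth_convex f grad
  for f :: "real^'n::finite \<Rightarrow> real" and grad +
  fixes l u :: "'n \<Rightarrow> ereal" and b :: real and x0 :: "real^'n"
  assumes bounds_ordered: "\<forall>i. l i < u i"
    and grad_lipschitz: "\<exists>L. \<forall>y w. norm (grad y - grad w) \<le> L * norm (y - w)"
    and start_feasible: "x0 \<in> feas b l u"
    and level_compact: "compact (level0 f b l u x0)"
    and level_interior: "\<forall>y\<in>level0 f b l u x0. \<exists>i. l i < ereal (y$i) \<and> ereal (y$i) < u i"
begin

lemma exists_stationary_minimizer: "\<exists>xs\<in>Xstar grad b l u. \<forall>y\<in>feas b l u. f xs \<le> f y"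
proof -
  have "continuous_on (level0 f b l u x0) f"
    using has_grad has_derivative_continuous continuous_at_imp_continuous_on by blast
  moreover have "x0 \<in> level0 f b l u x0"
    using start_feasible by (simp add: level0_def)
  ultimately obtain xs where xs: "xs \<in> level0 f b l u x0" "\<forall>y\<in>level0 f b l u x0. f xs \<le> f y"
    using continuous_attains_inf[OF level_compact] by blast
  have min: "\<forall>y\<in>feas b l u. f xs \<le> f y"
  proof
    fix y assume y: "y \<in> feas b l u"
    show "f xs \<le> f y"
    proof (cases "f y \<le> f x0")
      case True
      with y xs(2) show ?thesis by (simp add: level0_def)
    next
      case False
      with xs(2) \<open>x0 \<in> level0 f b l u x0\<close> show ?thesis by fastforce
    qed
  qed
  obtain i0 where "l i0 < ereal (xs$i0)" "ereal (xs$i0) < u i0"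
    using level_interior xs(1) by blast
  with xs(1) min have "stationary grad b l u xs"
    using minimizer_stationary[of f grad xs] has_grad bounds_ordered by (simp add: level0_def)
  with min show ?thesis
    by (auto simp: Xstar_def)
qed

lemma Xstar_subset_level0: "Xstar grad b l u \<subseteq> level0 f b l u x0"
  using stationary_imp_minimizer[OF _ start_feasible]
  by (auto simp: Xstar_def level0_def stationary_def)

lemma R0_upper:
  assumes "y \<in> level0 f b l u x0" and "xs \<in> Xstar grad b l u"
  shows "norm_ex j (y - xs) \<le> R0 f grad b l u x0"
proof -
  obtain B where B: "\<forall>y\<in>level0 f b l u x0. norm y \<le> B"
    using compact_imp_bounded[OF level_compact] by (auto simp: bounded_iff)
  have "norm_ex j' (y' - xs') \<le> B + B"
    if "y' \<in> level0 f b l u x0" "xs' \<in> Xstar grad b l u" for j' y' xs'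
  proof -
    have "norm y' \<le> B" "norm xs' \<le> B"
      using B that Xstar_subset_level0 by auto
    then show ?thesis
      using norm_ex_le_norm[of j' "y' - xs'"] norm_triangle_ineq4[of y' xs'] by linarith
  qed
  then have "bdd_above {norm_ex j (y - xs) | j y xs. y \<in> level0 f b l u x0 \<and> xs \<in> Xstar grad b l u}"
    by (auto intro!: bdd_aboveI)
  with assms show ?thesis
    unfolding R0_def by (intro cSup_upper) blast+
qed

lemma R0_nonneg: "0 \<le> R0 f grad b l u x0"
proof -
  obtain xs where "xs \<in> Xstar grad b l u"
    using exists_stationary_minimizer by blast
  moreover from this have "xs \<in> level0 f b l u x0"
    using Xstar_subset_level0 by blast
  ultimately show ?thesis
    using R0_upper norm_ex_nonneg order_trans by blast
qed

lemma Gstar_nonneg: "0 \<le> Gstar grad b l u"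
proof -
  obtain L where L: "\<forall>y w. norm (grad y - grad w) \<le> L * norm (y - w)"
    using grad_lipschitz by blast
  obtain B where B: "\<forall>y\<in>level0 f b l u x0. dist x0 y \<le> B"
    using compact_imp_bounded[OF level_compact] by (auto simp: bounded_any_center[where a = x0])
  define C where "C = norm (grad x0) + \<bar>L\<bar> * B"
  have grad_bound: "norm (grad y) \<le> C" if "y \<in> level0 f b l u x0" for y
  proof -
    have "norm (grad y) \<le> norm (grad x0) + L * norm (y - x0)"
      using norm_triangle_sub[of "grad y" "grad x0"] L by (meson add_left_mono order_trans)
    also have "\<dots> \<le> C"
      using B that abs_ge_self[of L] unfolding C_def
      by (intro add_left_mono mult_mono) (auto simp: dist_norm norm_minus_commute)
    finally show ?thesis .
  qed
  have "grad xs $ j - grad xs $ i \<le> C + C" if "xs \<in> Xstar grad b l u" for i j xs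
  proof -
    have "norm (grad xs) \<le> C"
      using that Xstar_subset_level0 grad_bound by blast
    then show ?thesis
      using component_le_norm_cart[of "grad xs" i] component_le_norm_cart[of "grad xs" j]
      by (simp add: abs_le_iff)
  qed
  then have "bdd_above {grad xs $ j - grad xs $ i | i j xs. xs \<in> Xstar grad b l u}"
    by (auto intro!: bdd_aboveI)
  moreover obtain xs where "xs \<in> Xstar grad b l u"
    using exists_stationary_minimizer by blast
  ultimately have "grad xs $ i - grad xs $ i \<le> Gstar grad b l u" for i
    unfolding Gstar_def by (intro cSup_upper) blast+
  then show ?thesis
    by simp
qed

end

locale ac2cd_run =
  pair_smooth_convex f grad Lc + ac2cd_problem f grad l u b "x 0"
  for f :: "real^'n::finite \<Rightarrow> real" and grad Lc l u b and x :: "nat \<Rightarrow> real^'n" +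
  fixes \<tau> \<gamma> \<delta> Al Au :: real and j :: "nat \<Rightarrow> 'n" and p :: "nat \<Rightarrow> nat \<Rightarrow> 'n"
    and A \<alpha> :: "nat \<Rightarrow> nat \<Rightarrow> real" and z :: "nat \<Rightarrow> nat \<Rightarrow> real^'n"
  assumes gamma: "0 < \<gamma>" "\<gamma> < 1" and delta: "0 < \<delta>" "\<delta> < 1"
    and A_bounds: "0 < Al" "Al \<le> Au"
    and run: "AC2CD_run f grad l u \<tau> \<gamma> \<delta> Al Au x j p A z \<alpha>"
    and j_interior: "\<forall>k' i. 1 \<le> i \<and> i \<le> CARD('n) + 1 \<longrightarrow>
        l (j k') < ereal (z k' i $ j k') \<and> ereal (z k' i $ j k') < u (j k')"
begin

definition gk :: "nat \<Rightarrow> nat \<Rightarrow> real" where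
  "gk k i = grad (z k i) $ j k - grad (z k i) $ p k i"

definition dir :: "nat \<Rightarrow> nat \<Rightarrow> real^'n" where
  "dir k i = axis (p k i) 1 - axis (j k) 1"

definition trial :: "nat \<Rightarrow> nat \<Rightarrow> real" where
  "trial k i = real_of_ereal (min (abar l u (j k) (p k i) (z k i) (gk k i)) (ereal (A k i)))"

lemma inner_step:
  assumes "1 \<le> i" "i \<le> CARD('n)"
  shows "Al \<le> A k i" "A k i \<le> Au"
    and "\<exists>m. \<alpha> k i = \<delta>^m * trial k i
        \<and> armijo f grad \<gamma> (z k i) (gk k i *\<^sub>R dir k i) (\<delta>^m * trial k i)
        \<and> (\<forall>m'<m. \<not> armijo f grad \<gamma> (z k i) (gk k i *\<^sub>R dir k i) (\<delta>^m' * trial k i))"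
    and "z k (Suc i) = z k i + (\<alpha> k i * gk k i) *\<^sub>R dir k i"
  using run assms unfolding AC2CD_run_def Let_def gk_def dir_def trial_def by auto

lemma first_inner_iterate: "z k 1 = x k"
  and last_inner_iterate: "x (Suc k) = z k (CARD('n) + 1)"
  using run unfolding AC2CD_run_def by auto

lemma permutation: "bij_betw (p k) {1..CARD('n)} UNIV"
  using run unfolding AC2CD_run_def by auto

lemma dir_component: "dir k i $ h = (if h = p k i then 1 else 0) - (if h = j k then 1 else 0)"
  by (simp add: dir_def axis_def)

lemma grad_inner_dir: "grad (z k i) \<bullet> dir k i = - gk k i"
  by (simp add: dir_def inner_axis_diff gk_def)

lemma trial_bounds:
  assumes "z k i \<in> feas b l u" "1 \<le> i" "i \<le> CARD('n)"
  shows "0 \<le> trial k i" "trial k i \<le> A k i"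
    "ereal (trial k i) \<le> abar l u (j k) (p k i) (z k i) (gk k i)"
proof -
  define m where "m = min (abar l u (j k) (p k i) (z k i) (gk k i)) (ereal (A k i))"
  have "0 \<le> m" "m \<le> ereal (A k i)"
    using abar_nonneg[OF assms(1)] inner_step(1)[OF assms(2,3), of k] A_bounds by (auto simp: m_def)
  moreover have "ereal (trial k i) = m"
    unfolding trial_def m_def[symmetric] using calculation by (cases m) auto
  ultimately have "ereal 0 \<le> ereal (trial k i)" "ereal (trial k i) \<le> ereal (A k i)"
    by (simp_all add: zero_ereal_def)
  then show "0 \<le> trial k i" "trial k i \<le> A k i"
    by simp_all
  show "ereal (trial k i) \<le> abar l u (j k) (p k i) (z k i) (gk k i)"
    using \<open>ereal (trial k i) = m\<close> by (simp add: m_def)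
qed

lemma step_le_trial:
  assumes "z k i \<in> feas b l u" "1 \<le> i" "i \<le> CARD('n)"
  shows "0 \<le> \<alpha> k i" "\<alpha> k i \<le> trial k i"
proof -
  obtain m where m: "\<alpha> k i = \<delta>^m * trial k i"
    using inner_step(3)[OF assms(2,3)] by blast
  have "0 \<le> \<delta>^m" "\<delta>^m \<le> 1"
    using delta by (simp_all add: power_le_one)
  with m trial_bounds(1)[OF assms] show "0 \<le> \<alpha> k i" "\<alpha> k i \<le> trial k i"
    by (simp_all add: mult_left_le_one_le)
qed

lemma inner_step_feasible:
  assumes "z k i \<in> feas b l u" "1 \<le> i" "i \<le> CARD('n)"
  shows "z k (Suc i) \<in> feas b l u"
proof (cases "p k i = j k")
  case True
  then show ?thesis
    using assms inner_step(4)[OF assms(2,3)] by (simp add: dir_def)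
next
  case False
  have "ereal (\<alpha> k i) \<le> abar l u (j k) (p k i) (z k i) (gk k i)"
    using step_le_trial(2)[OF assms] trial_bounds(3)[OF assms] order_trans ereal_less_eq(3) by blast
  from abar_step_feasible[OF assms(1) False step_le_trial(1)[OF assms] this]
  show ?thesis
    using inner_step(4)[OF assms(2,3)] by (simp add: dir_def)
qed

lemma inner_step_decrease:
  assumes "1 \<le> i" "i \<le> CARD('n)"
  shows "f (z k (Suc i)) \<le> f (z k i) - \<gamma> * \<alpha> k i * (gk k i)\<^sup>2"
proof -
  obtain m where "\<alpha> k i = \<delta>^m * trial k i"
    and "armijo f grad \<gamma> (z k i) (gk k i *\<^sub>R dir k i) (\<delta>^m * trial k i)"
    using inner_step(3)[OF assms] by blast
  then show ?thesis
    using inner_step(4)[OF assms]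
    by (simp add: armijo_def grad_inner_dir power2_eq_square algebra_simps)
qed

lemma inner_iterate_in_sublevel:
  assumes "x k \<in> feas b l u" "1 \<le> i" "i \<le> CARD('n) + 1"
  shows "z k i \<in> feas b l u \<and> f (z k i) \<le> f (x k)"
  using assms(2,3)
proof (induction i rule: nat_induct_at_least)
  case base
  then show ?case
    using assms(1) first_inner_iterate[of k] by simp
next
  case (Suc i)
  then have i: "1 \<le> i" "i \<le> CARD('n)" and zi: "z k i \<in> feas b l u" "f (z k i) \<le> f (x k)"
    by auto
  have "0 \<le> \<gamma> * \<alpha> k i * (gk k i)\<^sup>2"
    using gamma step_le_trial(1)[OF zi(1) i] by simp
  then show ?case
    using inner_step_feasible[OF zi(1) i] inner_step_decrease[OF i, of k] zi(2) by simp
qed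

lemma iterates_in_level0: "x k \<in> level0 f b l u (x 0)"
proof (induction k)
  case 0
  then show ?case
    using start_feasible by (simp add: level0_def)
next
  case (Suc k)
  then show ?case
    using inner_iterate_in_sublevel[of k "CARD('n) + 1"]
    by (auto simp: level0_def last_inner_iterate)
qed

lemma inner_iterate_feasible: "1 \<le> i \<Longrightarrow> i \<le> CARD('n) + 1 \<Longrightarrow> z k i \<in> feas b l u"
  using inner_iterate_in_sublevel iterates_in_level0 by (simp add: level0_def)

lemma step_le_Au:
  assumes "1 \<le> i" "i \<le> CARD('n)"
  shows "0 \<le> \<alpha> k i" "\<alpha> k i \<le> Au"
proof -
  have "z k i \<in> feas b l u"
    using inner_iterate_feasible assms by simp
  then show "0 \<le> \<alpha> k i" "\<alpha> k i \<le> Au"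
    using step_le_trial[OF _ assms] trial_bounds(2)[OF _ assms] inner_step(2)[OF assms, of k] by force+
qed

lemma outer_decrease: "\<gamma> * (\<Sum>i\<in>{1..CARD('n)}. \<alpha> k i * (gk k i)\<^sup>2) \<le> f (x k) - f (x (Suc k))"
proof -
  have "\<gamma> * (\<Sum>i\<in>{1..CARD('n)}. \<alpha> k i * (gk k i)\<^sup>2)
      \<le> (\<Sum>i\<in>{1..CARD('n)}. f (z k i) - f (z k (Suc i)))"
    unfolding sum_distrib_left
  proof (intro sum_mono)
    fix i assume "i \<in> {1..CARD('n)}"
    then show "\<gamma> * (\<alpha> k i * (gk k i)\<^sup>2) \<le> f (z k i) - f (z k (Suc i))"
      using inner_step_decrease[of i k] by (simp add: algebra_simps)
  qed
  also have "\<dots> = f (z k 1) - f (z k (CARD('n) + 1))"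
    using sum_Suc_diff[of 1 "CARD('n)" "\<lambda>i. - f (z k i)"] by simp
  also have "\<dots> = f (x k) - f (x (Suc k))"
    by (simp only: first_inner_iterate last_inner_iterate)
  finally show ?thesis .
qed

abbreviation step_factor :: real where
  "step_factor \<equiv> max (1 / Al) (Lmax Lc / (2 * \<delta> * (1 - \<gamma>)))"

abbreviation radius :: real where
  "radius \<equiv> R0 f grad b l u (x 0)"

lemma inner_step_coordinates:
  assumes "1 \<le> i" "i \<le> CARD('n)" "p k i \<noteq> j k"
  shows "z k (Suc i) $ p k i = z k i $ p k i + \<alpha> k i * gk k i"
    and "z k (Suc i) $ j k = z k i $ j k - \<alpha> k i * gk k i"
  using inner_step(4)[OF assms(1,2)] assms(3) by (simp_all add: dir_component)

text \<open>Coordinate \<open>j k\<close> is never the blocking one: this is where the requirement on the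
  \<open>A k i\<close> enters.\<close>
lemma unreduced_step_long_or_blocked:
  assumes i: "1 \<le> i" "i \<le> CARD('n)" and g: "gk k i \<noteq> 0" and full: "\<alpha> k i = trial k i"
  shows "Al \<le> \<alpha> k i \<or> ereal (z k (Suc i) $ p k i) = (if 0 < gk k i then u (p k i) else l (p k i))"
proof (cases "abar l u (j k) (p k i) (z k i) (gk k i) < ereal (A k i)")
  case False
  then have "trial k i = A k i"
    by (simp add: trial_def min_absorb2 not_less)
  with full inner_step(1)[OF i, of k] show ?thesis
    by simp
next
  case True
  have "0 \<le> abar l u (j k) (p k i) (z k i) (gk k i)"
    using abar_nonneg[OF inner_iterate_feasible[of i k]] i by simp
  with True have "ereal (trial k i) = abar l u (j k) (p k i) (z k i) (gk k i)"
    by (cases "abar l u (j k) (p k i) (z k i) (gk k i)") (auto simp: trial_def)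
  from abar_step_active[OF g this] full
  have "ereal (z k i $ p k i + \<alpha> k i * gk k i) = (if 0 < gk k i then u (p k i) else l (p k i))
      \<or> ereal (z k i $ j k - \<alpha> k i * gk k i) = (if 0 < gk k i then l (j k) else u (j k))"
    by simp
  moreover have "p k i \<noteq> j k"
    using g by (auto simp: gk_def)
  moreover have "l (j k) < ereal (z k (Suc i) $ j k)" "ereal (z k (Suc i) $ j k) < u (j k)"
    using j_interior i by auto
  ultimately show ?thesis
    using inner_step_coordinates[OF i] by auto
qed

lemma backtracked_step_long:
  assumes i: "1 \<le> i" "i \<le> CARD('n)" and g: "gk k i \<noteq> 0"
    and step: "\<alpha> k i = \<delta>^Suc m * trial k i"
    and fail: "\<not> armijo f grad \<gamma> (z k i) (gk k i *\<^sub>R dir k i) (\<delta>^m * trial k i)"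
  shows "2 * \<delta> * (1 - \<gamma>) < Lc (p k i) (j k) * \<alpha> k i"
proof -
  have "p k i \<noteq> j k"
    using g by (auto simp: gk_def)
  then have lip: "\<bar>grad (z k i + s *\<^sub>R dir k i) \<bullet> dir k i - grad (z k i + t *\<^sub>R dir k i) \<bullet> dir k i\<bar>
      \<le> Lc (p k i) (j k) * \<bar>s - t\<bar>" for s t
    using Lc_lip unfolding dir_def by blast
  have "0 \<le> \<delta>^m * trial k i"
    using delta trial_bounds(1)[OF inner_iterate_feasible i] i by simp
  from armijo_failure_step_bound[OF has_grad lip grad_inner_dir g this fail]
  have "\<delta> * (2 * (1 - \<gamma>)) < \<delta> * (Lc (p k i) (j k) * (\<delta>^m * trial k i))"
    using delta by simp
  then show ?thesis
    using step by (simp add: algebra_simps)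
qed

lemma step_long_or_blocked:
  assumes i: "1 \<le> i" "i \<le> CARD('n)" and g: "gk k i \<noteq> 0"
  shows "Al \<le> \<alpha> k i \<or> 2 * \<delta> * (1 - \<gamma>) < Lc (p k i) (j k) * \<alpha> k i
    \<or> ereal (z k (Suc i) $ p k i) = (if 0 < gk k i then u (p k i) else l (p k i))"
proof -
  obtain m where m: "\<alpha> k i = \<delta>^m * trial k i"
    and fail: "\<forall>m'<m. \<not> armijo f grad \<gamma> (z k i) (gk k i *\<^sub>R dir k i) (\<delta>^m' * trial k i)"
    using inner_step(3)[OF i] by blast
  show ?thesis
  proof (cases m)
    case 0
    then show ?thesis
      using unreduced_step_long_or_blocked[OF i g] m by auto
  next
    case (Suc m')
    then show ?thesis
      using backtracked_step_long[OF i g, of m'] m fail by simp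
  qed
qed

lemma one_le_step_factor_mult:
  assumes "Al \<le> \<alpha> k i \<or> 2 * \<delta> * (1 - \<gamma>) < Lc (p k i) (j k) * \<alpha> k i"
  shows "1 \<le> step_factor * \<alpha> k i"
  using assms
proof
  assume long: "Al \<le> \<alpha> k i"
  have "1 = (1 / Al) * Al"
    using A_bounds by simp
  also have "\<dots> \<le> step_factor * \<alpha> k i"
    using long A_bounds by (intro mult_mono) (auto simp: le_max_iff_disj)
  finally show ?thesis .
next
  define c where "c = 2 * \<delta> * (1 - \<gamma>)"
  assume "2 * \<delta> * (1 - \<gamma>) < Lc (p k i) (j k) * \<alpha> k i"
  then have long: "c < Lc (p k i) (j k) * \<alpha> k i"
    by (simp add: c_def)
  have c: "0 < c"
    using gamma delta by (simp add: c_def)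
  have "0 < \<alpha> k i"
  proof (rule ccontr)
    assume "\<not> 0 < \<alpha> k i"
    then have "Lc (p k i) (j k) * \<alpha> k i \<le> 0"
      using Lc_nonneg by (simp add: mult_nonneg_nonpos)
    with long c show False
      by simp
  qed
  then have "Lc (p k i) (j k) * \<alpha> k i \<le> Lmax Lc * \<alpha> k i"
    using Lc_le_Lmax by (intro mult_right_mono) auto
  with long have "c < Lmax Lc * \<alpha> k i"
    by simp
  then have "1 \<le> Lmax Lc / c * \<alpha> k i"
    using c by (simp add: field_simps)
  also have "\<dots> \<le> step_factor * \<alpha> k i"
    using \<open>0 < \<alpha> k i\<close> by (intro mult_right_mono) (auto simp: c_def)
  finally show ?thesis .
qed

lemma coordinate_frozen:
  assumes i: "1 \<le> i" "i \<le> CARD('n)" and PJ: "p k i \<noteq> j k"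
  shows "x (Suc k) $ p k i = z k (Suc i) $ p k i"
proof -
  have "z k m $ p k i = z k (Suc i) $ p k i" if "Suc i \<le> m" "m \<le> CARD('n) + 1" for m
    using that
  proof (induction m rule: nat_induct_at_least)
    case (Suc m)
    have "p k m \<noteq> p k i"
      using inj_onD[OF bij_betw_imp_inj_on[OF permutation], of k m i] Suc i by auto
    with PJ have "dir k m $ p k i = 0"
      by (simp add: dir_component)
    with Suc show ?case
      using inner_step(4)[of m k] i by simp
  qed simp
  from this[of "CARD('n) + 1"] i show ?thesis
    by (simp add: last_inner_iterate)
qed

lemma inner_step_norm_ex:
  assumes "1 \<le> i" "i \<le> CARD('n)"
  shows "norm_ex (j k) (z k (Suc i) - z k i) \<le> \<alpha> k i * \<bar>gk k i\<bar>"
proof -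
  have "norm_ex (j k) (dir k i) \<le> 1"
  proof (cases "p k i = j k")
    case True
    then show ?thesis
      by (simp add: dir_def norm_ex_def)
  next
    case False
    then have "drop_coord (j k) (dir k i) = axis (p k i) 1"
      by (simp add: vec_eq_iff drop_coord_def dir_component axis_def)
    then show ?thesis
      by (metis norm_drop_coord norm_axis_1 order_refl)
  qed
  then show ?thesis
    using inner_step(4)[OF assms] step_le_Au(1)[OF assms]
    by (simp add: norm_ex_scaleR abs_mult mult_left_le)
qed

lemma inner_step_zero_sum:
  assumes "1 \<le> i" "i \<le> CARD('n)"
  shows "(\<Sum>h\<in>UNIV. (z k (Suc i) - z k i) $ h) = 0"
  using inner_step(4)[OF assms]
  by (simp add: dir_component sum_subtractf sum_distrib_left[symmetric] right_diff_distrib)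

text \<open>The relative gradient at \<open>x (Suc k)\<close> in coordinate \<open>p k i\<close> is \<open>-gk k i\<close> plus the
  changes made by the inner steps \<open>i, \<dots>, n\<close>.\<close>
lemma gradient_decomposition:
  assumes y0: "(\<Sum>h\<in>UNIV. y$h) = 0"
  shows "grad (x (Suc k)) \<bullet> y =
    (\<Sum>i\<in>{1..CARD('n)}. - gk k i * drop_coord (j k) y $ p k i) +
    (\<Sum>m\<in>{1..CARD('n)}. \<Sum>i\<in>{1..m}.
       diff_coord (j k) (grad (z k (Suc m)) - grad (z k m)) $ p k i * drop_coord (j k) y $ p k i)"
proof -
  define n where "n = CARD('n)"
  define Y where "Y = drop_coord (j k) y"
  define D where "D i = diff_coord (j k) (grad (z k i))" for i
  have "grad (x (Suc k)) \<bullet> y = D (Suc n) \<bullet> Y"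
    using inner_diff_coord_zero_sum[OF y0] inner_drop_coord[of "D (Suc n)" "j k" y]
    by (simp add: D_def Y_def n_def last_inner_iterate)
  also have "\<dots> = (\<Sum>h\<in>UNIV. D (Suc n) $ h * Y $ h)"
    by (simp add: inner_vec_def)
  also have "\<dots> = (\<Sum>i\<in>{1..n}. D (Suc n) $ p k i * Y $ p k i)"
    unfolding n_def by (rule sum.reindex_bij_betw[OF permutation, symmetric])
  also have "\<dots> = (\<Sum>i\<in>{1..n}. - gk k i * Y $ p k i
      + (\<Sum>m\<in>{i..n}. (D (Suc m) - D m) $ p k i * Y $ p k i))"
  proof (rule sum.cong[OF refl])
    fix i assume "i \<in> {1..n}"
    then have "(\<Sum>m\<in>{i..n}. (D (Suc m) - D m) $ p k i) = D (Suc n) $ p k i - D i $ p k i"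
      using sum_Suc_diff[of i n "\<lambda>m. D m $ p k i"] by simp
    also have "D i $ p k i = - gk k i"
      by (simp add: D_def diff_coord_def gk_def)
    finally have "(\<Sum>m\<in>{i..n}. (D (Suc m) - D m) $ p k i * Y $ p k i)
        = (D (Suc n) $ p k i + gk k i) * Y $ p k i"
      by (simp only: sum_distrib_right[symmetric]) simp
    then show "D (Suc n) $ p k i * Y $ p k i
        = - gk k i * Y $ p k i + (\<Sum>m\<in>{i..n}. (D (Suc m) - D m) $ p k i * Y $ p k i)"
      by (simp add: algebra_simps)
  qed
  also have "\<dots> = (\<Sum>i\<in>{1..n}. - gk k i * Y $ p k i)
      + (\<Sum>m\<in>{1..n}. \<Sum>i\<in>{1..m}. (D (Suc m) - D m) $ p k i * Y $ p k i)"
    unfolding sum.distrib by (simp only: sum_triangle_swap)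
  finally show ?thesis
    by (simp add: D_def Y_def n_def diff_coord_diff)
qed

lemma blocked_step_term_nonpos:
  assumes i: "1 \<le> i" "i \<le> CARD('n)" and g: "gk k i \<noteq> 0" and xs: "xs \<in> feas b l u"
    and blocked: "ereal (z k (Suc i) $ p k i) = (if 0 < gk k i then u (p k i) else l (p k i))"
  shows "- gk k i * drop_coord (j k) (x (Suc k) - xs) $ p k i \<le> 0"
proof -
  have "p k i \<noteq> j k"
    using g by (auto simp: gk_def)
  then have Y: "drop_coord (j k) (x (Suc k) - xs) $ p k i = z k (Suc i) $ p k i - xs $ p k i"
    using coordinate_frozen[OF i] by (simp add: drop_coord_def)
  show ?thesis
  proof (cases "0 < gk k i")
    case True
    with blocked have "ereal (xs $ p k i) \<le> ereal (z k (Suc i) $ p k i)"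
      using feasD(2)[OF xs] by simp
    with True Y show ?thesis
      by simp
  next
    case False
    with g have "gk k i < 0"
      by simp
    moreover from False blocked have "ereal (z k (Suc i) $ p k i) \<le> ereal (xs $ p k i)"
      using feasD(1)[OF xs] by simp
    ultimately show ?thesis
      using Y by (simp add: mult_nonpos_nonpos)
  qed
qed

lemma step_term_bound:
  assumes i: "1 \<le> i" "i \<le> CARD('n)" and xs: "xs \<in> Xstar grad b l u"
  shows "- gk k i * drop_coord (j k) (x (Suc k) - xs) $ p k i \<le> step_factor * (\<alpha> k i * \<bar>gk k i\<bar>) * radius"
proof -
  define Y where "Y = drop_coord (j k) (x (Suc k) - xs) $ p k i"
  have "\<bar>Y\<bar> \<le> radius"
    using component_le_norm_cart[of "drop_coord (j k) (x (Suc k) - xs)" "p k i"]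
      norm_drop_coord[of "j k" "x (Suc k) - xs"] R0_upper[OF iterates_in_level0[of "Suc k"] xs, of "j k"]
    by (simp add: Y_def)
  then have "\<bar>gk k i\<bar> * \<bar>Y\<bar> \<le> \<bar>gk k i\<bar> * radius"
    by (simp add: mult_left_mono)
  moreover have "- gk k i * Y \<le> \<bar>gk k i\<bar> * \<bar>Y\<bar>"
    by (metis abs_ge_minus_self abs_mult mult_minus_left)
  ultimately have bound: "- gk k i * Y \<le> \<bar>gk k i\<bar> * radius"
    by linarith
  have "0 \<le> step_factor"
    using A_bounds by (simp add: le_max_iff_disj)
  then have nonneg: "0 \<le> step_factor * (\<alpha> k i * \<bar>gk k i\<bar>) * radius"
    using step_le_Au(1)[OF i] R0_nonneg by simp
  show ?thesis
  proof (cases "gk k i = 0")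
    case True
    with nonneg show ?thesis
      by simp
  next
    case False
    have xs_feas: "xs \<in> feas b l u"
      using xs by (simp add: Xstar_def stationary_def)
    from step_long_or_blocked[OF i False]
    consider (blocked) "ereal (z k (Suc i) $ p k i) = (if 0 < gk k i then u (p k i) else l (p k i))"
      | (long) "Al \<le> \<alpha> k i \<or> 2 * \<delta> * (1 - \<gamma>) < Lc (p k i) (j k) * \<alpha> k i"
      by blast
    then show ?thesis
    proof cases
      case blocked
      with blocked_step_term_nonpos[OF i False xs_feas] nonneg show ?thesis
        by linarith
    next
      case long
      from mult_right_mono[OF one_le_step_factor_mult[OF long], of "\<bar>gk k i\<bar> * radius"]
      have "\<bar>gk k i\<bar> * radius \<le> step_factor * (\<alpha> k i * \<bar>gk k i\<bar>) * radius"
        using R0_nonneg by (simp add: algebra_simps)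
      with bound show ?thesis
        unfolding Y_def by linarith
    qed
  qed
qed

lemma gradient_change_term_bound:
  assumes m: "1 \<le> m" "m \<le> CARD('n)" and y: "norm_ex (j k) y \<le> r"
  shows "(\<Sum>i\<in>{1..m}. diff_coord (j k) (grad (z k (Suc m)) - grad (z k m)) $ p k i
           * drop_coord (j k) y $ p k i)
     \<le> (\<Sum>a\<in>UNIV. Lc a (j k)) * (\<alpha> k m * \<bar>gk k m\<bar>) * r"
proof -
  have "inj_on (p k) {1..m}"
    by (rule inj_on_subset[OF bij_betw_imp_inj_on[OF permutation[of k]]]) (use m in auto)
  then have "(\<Sum>i\<in>{1..m}. diff_coord (j k) (grad (z k (Suc m)) - grad (z k m)) $ p k i
        * drop_coord (j k) y $ p k i)
      \<le> norm (diff_coord (j k) (grad (z k (Suc m)) - grad (z k m))) * norm_ex (j k) y"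
    using sum_reindexed_inner_le[of "p k" "{1..m}" "diff_coord (j k) (grad (z k (Suc m)) - grad (z k m))"
        "drop_coord (j k) y"]
    by (simp add: norm_drop_coord)
  also have "\<dots> \<le> ((\<Sum>a\<in>UNIV. Lc a (j k)) * norm_ex (j k) (z k (Suc m) - z k m)) * norm_ex (j k) y"
    using diff_coord_lipschitz[OF inner_step_zero_sum[OF m]] norm_ex_nonneg
    by (rule mult_right_mono)
  also have "\<dots> \<le> (\<Sum>a\<in>UNIV. Lc a (j k)) * (\<alpha> k m * \<bar>gk k m\<bar>) * r"
    using inner_step_norm_ex[OF m] Lc_column_sum_pos[of "j k"] norm_ex_nonneg y step_le_Au(1)[OF m]
    by (intro mult_mono mult_left_mono) auto
  finally show ?thesis .
qed

lemma step_sum_sq_bound: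
  "(\<Sum>i\<in>{1..CARD('n)}. \<alpha> k i * \<bar>gk k i\<bar>)\<^sup>2
     \<le> Au * (real CARD('n) - 1) * (\<Sum>i\<in>{1..CARD('n)}. \<alpha> k i * (gk k i)\<^sup>2)"
proof -
  define I where "I = {i \<in> {1..CARD('n)}. p k i \<noteq> j k}"
  have inj: "inj_on (p k) I"
    using bij_betw_imp_inj_on[OF permutation[of k]] by (rule inj_on_subset) (auto simp: I_def)
  have "p k ` I = UNIV - {j k}"
  proof
    show "p k ` I \<subseteq> UNIV - {j k}"
      by (auto simp: I_def)
    show "UNIV - {j k} \<subseteq> p k ` I"
    proof
      fix h assume h: "h \<in> UNIV - {j k}"
      have "h \<in> p k ` {1..CARD('n)}"
        using permutation[of k] by (simp add: bij_betw_def)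
      with h show "h \<in> p k ` I"
        by (auto simp: I_def)
    qed
  qed
  then have card_I: "real (card I) = real CARD('n) - 1"
    using card_image[OF inj] card_ge_2 by (simp add: card_Diff_singleton of_nat_diff)
  have nonneg: "0 \<le> \<alpha> k i" if "i \<in> {1..CARD('n)}" for i
    using step_le_Au(1) that by simp
  have "(\<Sum>i\<in>{1..CARD('n)}. \<alpha> k i * \<bar>gk k i\<bar>) = (\<Sum>i\<in>I. \<alpha> k i * \<bar>gk k i\<bar>)"
    by (intro sum.mono_neutral_right) (auto simp: I_def gk_def)
  also have "\<dots>\<^sup>2 \<le> (\<Sum>i\<in>I. \<alpha> k i) * (\<Sum>i\<in>I. \<alpha> k i * (gk k i)\<^sup>2)"
    using nonneg by (intro weighted_Cauchy_Schwarz) (auto simp: I_def)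
  also have "\<dots> \<le> (real (card I) * Au) * (\<Sum>i\<in>{1..CARD('n)}. \<alpha> k i * (gk k i)\<^sup>2)"
  proof (rule mult_mono)
    show "(\<Sum>i\<in>I. \<alpha> k i) \<le> real (card I) * Au"
      using step_le_Au(2) by (intro sum_bounded_above) (auto simp: I_def)
    show "(\<Sum>i\<in>I. \<alpha> k i * (gk k i)\<^sup>2) \<le> (\<Sum>i\<in>{1..CARD('n)}. \<alpha> k i * (gk k i)\<^sup>2)"
      using nonneg by (intro sum_mono2) (auto simp: I_def)
    show "0 \<le> real (card I) * Au"
      using A_bounds by simp
    show "0 \<le> (\<Sum>i\<in>I. \<alpha> k i * (gk k i)\<^sup>2)"
      using nonneg by (intro sum_nonneg) (simp add: I_def)
  qed
  finally show ?thesis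
    by (simp add: card_I mult.commute)
qed

text \<open>The argument gives this with \<open>Lhat Lc * radius\<close> in place of \<open>2 * Lhat Lc * radius + Gstar grad b l u\<close>.\<close>
lemma optimality_gap_bound:
  assumes xs: "xs \<in> Xstar grad b l u"
  shows "f (x (Suc k)) - f xs
    \<le> (step_factor * radius + 2 * Lhat Lc * radius + Gstar grad b l u)
      * (\<Sum>i\<in>{1..CARD('n)}. \<alpha> k i * \<bar>gk k i\<bar>)"
proof -
  define y where "y = x (Suc k) - xs"
  define S where "S = (\<Sum>a\<in>UNIV. Lc a (j k))"
  have xs_feas: "xs \<in> feas b l u"
    using xs by (simp add: Xstar_def stationary_def)
  have x_feas: "x (Suc k) \<in> feas b l u"
    using iterates_in_level0 by (simp add: level0_def)
  have y0: "(\<Sum>h\<in>UNIV. y$h) = 0"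
    using feasD(3)[OF xs_feas] feasD(3)[OF x_feas] by (simp add: y_def sum_subtractf)
  have y_bound: "norm_ex (j k) y \<le> radius"
    unfolding y_def by (rule R0_upper[OF iterates_in_level0 xs])
  have step_nonneg: "0 \<le> \<alpha> k i * \<bar>gk k i\<bar>" if "i \<in> {1..CARD('n)}" for i
    using step_le_Au(1) that by simp
  have "f (x (Suc k)) - f xs \<le> grad (x (Suc k)) \<bullet> y"
    using gradient_inequality[of "x (Suc k)" xs] by (simp add: y_def inner_diff_right)
  also have "\<dots> \<le> (\<Sum>i\<in>{1..CARD('n)}. step_factor * (\<alpha> k i * \<bar>gk k i\<bar>) * radius)
      + (\<Sum>m\<in>{1..CARD('n)}. S * (\<alpha> k m * \<bar>gk k m\<bar>) * radius)"
    unfolding gradient_decomposition[OF y0]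
  proof (intro add_mono sum_mono)
    fix i assume "i \<in> {1..CARD('n)}"
    then show "- gk k i * drop_coord (j k) y $ p k i \<le> step_factor * (\<alpha> k i * \<bar>gk k i\<bar>) * radius"
      using step_term_bound xs by (simp add: y_def)
    from \<open>i \<in> {1..CARD('n)}\<close> show "(\<Sum>i'\<in>{1..i}. diff_coord (j k) (grad (z k (Suc i)) - grad (z k i))
        $ p k i' * drop_coord (j k) y $ p k i') \<le> S * (\<alpha> k i * \<bar>gk k i\<bar>) * radius"
      using gradient_change_term_bound[OF _ _ y_bound] by (simp add: S_def)
  qed
  also have "\<dots> = (step_factor * radius + S * radius) * (\<Sum>i\<in>{1..CARD('n)}. \<alpha> k i * \<bar>gk k i\<bar>)"
    by (simp add: sum_distrib_left sum_distrib_right sum.distrib algebra_simps)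
  also have "\<dots> \<le> (step_factor * radius + 2 * Lhat Lc * radius + Gstar grad b l u)
      * (\<Sum>i\<in>{1..CARD('n)}. \<alpha> k i * \<bar>gk k i\<bar>)"
  proof (rule mult_right_mono)
    have "S \<le> Lhat Lc" "0 < S"
      using column_sum_le_Lhat[of Lc "j k"] Lc_column_sum_pos by (simp_all add: S_def)
    then have "S * radius \<le> Lhat Lc * radius" "0 \<le> Lhat Lc * radius"
      using R0_nonneg by (simp_all add: mult_right_mono)
    then show "step_factor * radius + S * radius
        \<le> step_factor * radius + 2 * Lhat Lc * radius + Gstar grad b l u"
      using Gstar_nonneg by linarith
    show "0 \<le> (\<Sum>i\<in>{1..CARD('n)}. \<alpha> k i * \<bar>gk k i\<bar>)"
      by (rule sum_nonneg) (rule step_nonneg)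
  qed
  finally show ?thesis .
qed

end

theorem proposition4:
  fixes f :: "real^'n::finite \<Rightarrow> real" and grad :: "real^'n \<Rightarrow> real^'n"
    and l u :: "'n \<Rightarrow> ereal" and b :: real and Lc :: "'n \<Rightarrow> 'n \<Rightarrow> real"
    and \<tau> \<gamma> \<delta> Al Au :: real
    and x :: "nat \<Rightarrow> real^'n" and j :: "nat \<Rightarrow> 'n" and p :: "nat \<Rightarrow> nat \<Rightarrow> 'n"
    and A \<alpha> :: "nat \<Rightarrow> nat \<Rightarrow> real" and z :: "nat \<Rightarrow> nat \<Rightarrow> real^'n"
    and k :: nat
  assumes n2: "CARD('n) \<ge> 2"
    and lu: "\<forall>i. l i < u i" "\<forall>i. l i \<noteq> \<infinity>" "\<forall>i. u i \<noteq> -\<infinity>"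
    and grad: "\<forall>y. (f has_derivative (\<lambda>h. grad y \<bullet> h)) (at y)"
    and grad_lip: "\<exists>L. \<forall>y w. norm (grad y - grad w) \<le> L * norm (y - w)"
    and Lc_pos: "\<forall>i i'. i \<noteq> i' \<longrightarrow> Lc i i' > 0"
    and Lc_diag: "\<forall>i. Lc i i = 0"
    and Lc_lip: "\<forall>i i' y s t. i \<noteq> i' \<longrightarrow>
        \<bar>grad (y + s *\<^sub>R (axis i 1 - axis i' 1)) \<bullet> (axis i 1 - axis i' 1)
         - grad (y + t *\<^sub>R (axis i 1 - axis i' 1)) \<bullet> (axis i 1 - axis i' 1)\<bar> \<le> Lc i i' * \<bar>s - t\<bar>"
    and cvx: "convex_on UNIV f"
    and par: "0 < \<tau>" "\<tau> \<le> 1" "0 < \<gamma>" "\<gamma> < 1" "0 < \<delta>" "\<delta> < 1" "0 < Al" "Al \<le> Au"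
    and x0: "x 0 \<in> feas b l u"
    and L0_compact: "compact (level0 f b l u (x 0))"
    and L0_ne: "level0 f b l u (x 0) \<noteq> {}"
    and L0_interior: "\<forall>y\<in>level0 f b l u (x 0). \<exists>i. l i < ereal (y$i) \<and> ereal (y$i) < u i"
    and run: "AC2CD_run f grad l u \<tau> \<gamma> \<delta> Al Au x j p A z \<alpha>"
    and req: "\<forall>k' i. 1 \<le> i \<and> i \<le> CARD('n) + 1 \<longrightarrow>
        l (j k') < ereal (z k' i $ j k') \<and> ereal (z k' i $ j k') < u (j k')"
  shows "f (x k) - f (x (Suc k)) \<ge>
     \<gamma> * (f (x (Suc k)) - Inf (f ` feas b l u))^2 /
     (Au * (real CARD('n) - 1) *
      (max (1 / Al) (Lmax Lc / (2 * \<delta> * (1 - \<gamma>))) * R0 f grad b l u (x 0)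
       + 2 * Lhat Lc * R0 f grad b l u (x 0) + Gstar grad b l u)^2)"
proof -
  interpret ac2cd_run f grad Lc l u b x \<tau> \<gamma> \<delta> Al Au j p A \<alpha> z
    by unfold_locales (fact assms)+
  obtain xs where xs: "xs \<in> Xstar grad b l u" and min: "\<forall>y\<in>feas b l u. f xs \<le> f y"
    using exists_stationary_minimizer by blast
  have "xs \<in> feas b l u"
    using xs by (simp add: Xstar_def stationary_def)
  with min have f_star: "Inf (f ` feas b l u) = f xs"
    by (intro cInf_eq_minimum) auto
  have x_feas: "x (Suc k) \<in> feas b l u"
    using iterates_in_level0 by (simp add: level0_def)
  have "0 \<le> (\<Sum>i\<in>{1..CARD('n)}. \<alpha> k i * (gk k i)\<^sup>2)"
    using step_le_Au(1) by (intro sum_nonneg) simp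
  from quadratic_decrease_bound[OF _ optimality_gap_bound[OF xs] step_sum_sq_bound _ gamma(1) this
      outer_decrease]
  show ?thesis
    using min x_feas A_bounds card_ge_2 by (simp add: f_star)
qed

end
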